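(* Fix $m\in\mathbb{N}$, $\rho\in\mathbb{R}$, and $\alpha\in(0,e^{-\rho}(m\pi)^{-1/2})$. For each $n\ge1$ let \[K_n(x)=\frac{e^{n\rho}}{\binom{m-1+n/2}{m-1}}\,L_{m-1}^{n/2}\!\left(\frac1m\left|\frac x\alpha\right|^2\right)e^{-|x/\alpha|^2/m},\qquad x\in\mathbb{R}^n,\] and let $X_n$ be a random vector in $\mathbb{R}^n$ with probability density $K_n(x)^2/\|K_n\|_2^2$. Then the sequence $\{|X_n|/\sqrt n\}_n$ satisfies a large deviation principle (speed $n$) with rate function \[\Lambda^*(x)=\frac{2x^2}{\alpha^2m}-\frac12+\frac12\log\left(\frac{\alpha^2m}{4x^2}\right),\quad x>0.\]
   Context: $L_m^{\beta}(r)=\sum_{k=0}^m\binom{m+\beta}{m-k}\frac{(-r)^k}{k!}$ denotes the generalized Laguerre polynomial, with $\binom{a}{j}$ the generalized binomial coefficient for real $a$. $\log$ is the natural logarithm. A sequence $Y_n$ satisfies an LDP with rate function $I$ if for all Borel $A$, $-\inf_{A^\circ}I\le\liminf\frac1n\ln\mathbb{P}(Y_n\in A)\le\limsup\frac1n\ln\mathbb{P}(Y_n\in A)\le-\inf_{\bar A}I$. *)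

theory Defs
  imports "HOL-Probability.Probability"
begin

definition laguerre :: "nat \<Rightarrow> real \<Rightarrow> real \<Rightarrow> real" where
  "laguerre m \<beta> r = (\<Sum>k=0..m. ((real m + \<beta>) gchoose (m - k)) * (- r) ^ k / fact k)"

text \<open>Squared Euclidean norm of a vector in R^n, represented as a function nat => real
  on the coordinates 0..n-1.\<close>
definition sqnorm :: "nat \<Rightarrow> (nat \<Rightarrow> real) \<Rightarrow> real" where
  "sqnorm n x = (\<Sum>i<n. (x i)^2)"

definition Rn :: "nat \<Rightarrow> (nat \<Rightarrow> real) measure" where
  "Rn n = PiM {..<n} (\<lambda>_. lborel)"

definition ln_ereal :: "real \<Rightarrow> ereal" where
  "ln_ereal p = (if p \<le> 0 then -\<infinity> else ereal (ln p))"

definition LDP :: "(nat \<Rightarrow> 'a measure) \<Rightarrow> (nat \<Rightarrow> 'a \<Rightarrow> real) \<Rightarrow> (real \<Rightarrow> ereal) \<Rightarrow> bool" where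
  "LDP M Y I \<longleftrightarrow> (\<forall>A \<in> sets borel.
     let p = (\<lambda>n. ereal (1 / real n) * ln_ereal (measure (M n) {\<omega> \<in> space (M n). Y n \<omega> \<in> A}))
     in - (INF x\<in>interior A. I x) \<le> liminf p
        \<and> liminf p \<le> limsup p
        \<and> limsup p \<le> - (INF x\<in>closure A. I x))"

definition Kn :: "nat \<Rightarrow> real \<Rightarrow> real \<Rightarrow> nat \<Rightarrow> (nat \<Rightarrow> real) \<Rightarrow> real" where
  "Kn m \<rho> \<alpha> n x =
     exp (real n * \<rho>) / ((real m - 1 + real n / 2) gchoose (m - 1))
     * laguerre (m - 1) (real n / 2) (sqnorm n x / \<alpha>^2 / real m)
     * exp (- (sqnorm n x / \<alpha>^2) / real m)"

definition rate :: "nat \<Rightarrow> real \<Rightarrow> real \<Rightarrow> ereal" where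
  "rate m \<alpha> x = (if x > 0 then
      ereal (2 * x^2 / (\<alpha>^2 * real m) - 1/2 + 1/2 * ln (\<alpha>^2 * real m / (4 * x^2)))
    else \<infinity>)"

end

theory Submission
  imports Defs "HOL-Computational_Algebra.Fundamental_Theorem_Algebra" "HOL-Real_Asymp.Real_Asymp"
begin

text \<open>Up to normalisation the density of \<open>X\<^sub>n\<close> is \<open>L(|x|\<^sup>2)\<^sup>2 exp(-c\<^sub>0 |x|\<^sup>2)\<close>, where
  \<open>c\<^sub>0 = 2/(\<alpha>\<^sup>2 m)\<close> and \<open>L\<close> is a Laguerre polynomial of fixed degree \<open>m - 1\<close>. The polynomial factor is
  invisible at exponential scale: from above it costs at most a polynomial in \<open>n\<close> times
  \<open>exp(\<epsilon>|x|\<^sup>2)\<close> for any \<open>\<epsilon> > 0\<close>, and from below, having only \<open>m - 1\<close> roots, it stays uniformly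
  away from zero on one of any \<open>m\<close> well separated windows of values of \<open>|x|\<^sup>2/n\<close>. Hence the mass of
  \<open>{x. |x|\<^sup>2/n \<in> B}\<close> behaves like the corresponding Gaussian mass, which by Chernoff bounds is
  \<open>exp(n \<phi>(s) + o(n))\<close> for \<open>B\<close> a neighbourhood of \<open>s\<close>, with \<open>\<phi>(s) = log(2\<pi>s)/2 - c\<^sub>0 s + 1/2\<close>.
  Dividing by the total mass \<open>exp(n \<phi>(1/(2c\<^sub>0)) + o(n))\<close> and substituting \<open>s = x\<^sup>2\<close> gives
  \<open>\<Lambda>\<^sup>*\<close>.\<close>

subsection \<open>Gaussian integrals over \<open>\<real>\<^sup>n\<close>\<close>

lemma nn_integral_exp_neg_square:
  assumes a: "0 < a"
  shows "(\<integral>\<^sup>+x. ennreal (exp (- a * x\<^sup>2)) \<partial>lborel) = ennreal (sqrt (pi / a))"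
proof -
  define \<sigma> where "\<sigma> = sqrt (1 / (2 * a))"
  have s: "0 < \<sigma>" using a by (simp add: \<sigma>_def)
  have s2: "\<sigma>\<^sup>2 = 1 / (2 * a)" using a by (simp add: \<sigma>_def)
  have eq: "\<And>x. normal_density 0 \<sigma> x = sqrt (a / pi) * exp (- a * x\<^sup>2)"
    unfolding normal_density_def s2 using a
    by (simp add: field_simps real_sqrt_divide)
  have "(\<integral>\<^sup>+x. ennreal (normal_density 0 \<sigma> x) \<partial>lborel) = ennreal 1"
    by (subst nn_integral_eq_integral) (auto simp: s)
  moreover have "(\<lambda>x. ennreal (sqrt (a / pi)) * ennreal (exp (- a * x\<^sup>2)))
      = (\<lambda>x. ennreal (normal_density 0 \<sigma> x))"
    using a by (intro ext, unfold eq, subst ennreal_mult) auto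
  ultimately have "ennreal (sqrt (a / pi)) * (\<integral>\<^sup>+x. ennreal (exp (- a * x\<^sup>2)) \<partial>lborel) = 1"
    by (subst nn_integral_cmult[symmetric]) auto
  moreover have sc: "ennreal (sqrt (pi / a)) * ennreal (sqrt (a / pi)) = 1"
    using a by (subst ennreal_mult[symmetric]) (auto simp: real_sqrt_mult[symmetric])
  ultimately have "ennreal (sqrt (pi / a)) * (ennreal (sqrt (a / pi))
      * (\<integral>\<^sup>+x. ennreal (exp (- a * x\<^sup>2)) \<partial>lborel)) = ennreal (sqrt (pi / a))"
    by simp
  thus ?thesis by (simp add: mult.assoc[symmetric] sc)
qed

lemma measurable_sqnorm[measurable]: "sqnorm n \<in> borel_measurable (Rn n)"
  unfolding sqnorm_def Rn_def by measurable

lemma sqnorm_nonneg: "0 \<le> sqnorm n x"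
  unfolding sqnorm_def by (simp add: sum_nonneg)

lemma nn_integral_exp_neg_sqnorm:
  assumes a: "0 < a" and c: "0 \<le> c"
  shows "(\<integral>\<^sup>+x. ennreal (c * exp (- a * sqnorm n x)) \<partial>Rn n) = ennreal (c * sqrt (pi / a) ^ n)"
proof -
  interpret product_sigma_finite "\<lambda>_. lborel :: real measure" by standard
  have "\<And>x. ennreal (exp (- a * sqnorm n x)) = (\<Prod>i\<in>{..<n}. ennreal (exp (- a * (x i)\<^sup>2)))"
    unfolding sqnorm_def
    by (simp add: sum_distrib_left exp_sum prod_ennreal[symmetric] sum_negf[symmetric])
  hence "\<And>x. ennreal (c * exp (- a * sqnorm n x))
      = ennreal c * (\<Prod>i\<in>{..<n}. ennreal (exp (- a * (x i)\<^sup>2)))"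
    using c by (simp add: ennreal_mult)
  hence "(\<integral>\<^sup>+x. ennreal (c * exp (- a * sqnorm n x)) \<partial>Rn n)
       = ennreal c * (\<integral>\<^sup>+x. (\<Prod>i\<in>{..<n}. ennreal (exp (- a * (x i)\<^sup>2))) \<partial>Rn n)"
    by (simp add: nn_integral_cmult Rn_def)
  also have "(\<integral>\<^sup>+x. (\<Prod>i\<in>{..<n}. ennreal (exp (- a * (x i)\<^sup>2))) \<partial>Rn n)
      = (\<Prod>i\<in>{..<n}. \<integral>\<^sup>+y. ennreal (exp (- a * y\<^sup>2)) \<partial>lborel)"
    unfolding Rn_def
    using product_nn_integral_prod[of "{..<n}" "\<lambda>i y. ennreal (exp (- a * y\<^sup>2))"] by simp
  also have "\<dots> = ennreal (sqrt (pi / a) ^ n)"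
    using nn_integral_exp_neg_square[OF a] ennreal_power[of "sqrt (pi / a)" n] a by simp
  finally show ?thesis using c by (simp add: ennreal_mult')
qed

subsection \<open>Polynomials away from their roots\<close>

lemma norm_prod_mset_complex: "norm (\<Prod>z\<in>#R. f z :: complex) = (\<Prod>z\<in>#R. norm (f z))"
  by (induction R) (auto simp: norm_mult)

lemma power_size_le_prod_mset:
  fixes f :: "'a \<Rightarrow> real"
  assumes "0 \<le> c" "\<And>z. z \<in># R \<Longrightarrow> c \<le> f z"
  shows "c ^ size R \<le> (\<Prod>z\<in>#R. f z)"
  using assms(2)
proof (induction R)
  case (add x R)
  hence "c ^ size R \<le> (\<Prod>z\<in>#R. f z)" "c \<le> f x" by auto
  thus ?case using assms(1) by (simp add: mult_mono)
qed simp

lemma abs_poly_eq_prod_roots: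
  fixes cf :: "nat \<Rightarrow> real" and d :: nat
  assumes nz: "cf d \<noteq> 0"
  obtains R :: "complex multiset" where "size R = d"
    "\<And>u::real. \<bar>\<Sum>k\<le>d. cf k * u ^ k\<bar> = \<bar>cf d\<bar> * (\<Prod>z\<in>#R. cmod (complex_of_real u - z))"
proof -
  define p where "p = (\<Sum>k\<le>d. monom (complex_of_real (cf k)) k)"
  have cp: "coeff p k = (if k \<le> d then complex_of_real (cf k) else 0)" for k
    unfolding p_def coeff_sum by (auto simp: coeff_monom)
  have dp: "degree p = d"
  proof (rule antisym)
    show "degree p \<le> d" by (rule degree_le) (auto simp: cp)
    show "d \<le> degree p" by (rule le_degree) (simp add: cp nz)
  qed
  have lc: "lead_coeff p = complex_of_real (cf d)" by (simp add: dp cp)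
  have pv: "poly p (complex_of_real u) = complex_of_real (\<Sum>k\<le>d. cf k * u ^ k)" for u
    unfolding p_def poly_sum by (simp add: poly_monom)
  have dec: "smult (lead_coeff p) (\<Prod>x\<in>#proots p. [:-x, 1:]) = p"
    by (rule complex_poly_decompose_multiset)
  have "\<bar>\<Sum>k\<le>d. cf k * u ^ k\<bar> = \<bar>cf d\<bar> * (\<Prod>z\<in>#proots p. cmod (complex_of_real u - z))" for u
  proof -
    have "\<bar>\<Sum>k\<le>d. cf k * u ^ k\<bar> = cmod (poly p (complex_of_real u))"
      by (simp only: pv norm_of_real)
    also have "\<dots> = cmod (poly (smult (lead_coeff p) (\<Prod>x\<in>#proots p. [:-x, 1:])) (complex_of_real u))"
      by (simp add: dec)
    also have "\<dots> = \<bar>cf d\<bar> * (\<Prod>z\<in>#proots p. cmod (complex_of_real u - z))"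
      by (simp add: lc poly_prod_mset norm_mult norm_prod_mset_complex)
    finally show ?thesis .
  qed
  moreover have "size (proots p) = d" by (simp add: size_proots_complex dp)
  ultimately show ?thesis using that by blast
qed

lemma abs_poly_ge_distance_to_roots:
  fixes cf :: "nat \<Rightarrow> real" and d :: nat
  assumes nz: "cf d \<noteq> 0"
  obtains R :: "complex multiset" where "size R = d"
    "\<And>u h. 0 \<le> h \<Longrightarrow> (\<forall>z\<in>#R. h \<le> \<bar>u - Re z\<bar>) \<Longrightarrow> \<bar>cf d\<bar> * h ^ d \<le> \<bar>\<Sum>k\<le>d. cf k * u ^ k\<bar>"
proof -
  obtain R :: "complex multiset" where sR: "size R = d" and
    eq: "\<And>u::real. \<bar>\<Sum>k\<le>d. cf k * u ^ k\<bar> = \<bar>cf d\<bar> * (\<Prod>z\<in>#R. cmod (complex_of_real u - z))"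
    using abs_poly_eq_prod_roots[of cf d, OF nz] by blast
  have "\<bar>cf d\<bar> * h ^ d \<le> \<bar>\<Sum>k\<le>d. cf k * u ^ k\<bar>"
    if h: "0 \<le> h" and hz: "\<forall>z\<in>#R. h \<le> \<bar>u - Re z\<bar>" for u h
  proof -
    have "h \<le> cmod (complex_of_real u - z)" if "z \<in># R" for z
    proof -
      have "h \<le> \<bar>Re (complex_of_real u - z)\<bar>" using hz that by auto
      also have "\<dots> \<le> cmod (complex_of_real u - z)" by (rule abs_Re_le_cmod)
      finally show ?thesis .
    qed
    hence "h ^ size R \<le> (\<Prod>z\<in>#R. cmod (complex_of_real u - z))"
      by (intro power_size_le_prod_mset h)
    thus ?thesis unfolding eq sR by (simp add: mult_left_mono)
  qed
  with sR that show ?thesis by blast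
qed

text \<open>The \<open>m\<close> points \<open>t\<^sub>1 + (2j + 1)h\<close> are \<open>2h\<close> apart, so each point \<open>Re z / n\<close> is within \<open>2h/3\<close> of
  at most one of them; fewer than \<open>m\<close> roots cannot block all of them.\<close>
lemma exists_center_far_from_roots:
  fixes R :: "complex multiset" and m n :: nat and t1 h :: real
  assumes sz: "size R < m" and h: "0 < h"
  shows "\<exists>j<m. \<forall>z\<in>#R. 2*h/3 \<le> \<bar>Re z / real n - (t1 + (2 * real j + 1) * h)\<bar>"
proof -
  define s where "s j = t1 + (2 * real j + 1) * h" for j :: nat
  define near where "near z j \<longleftrightarrow> j < m \<and> \<bar>Re z / real n - s j\<bar> < 2*h/3" for z j
  have uniq: "j = j'" if "near z j" "near z j'" for z j j'
  proof (rule ccontr)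
    assume "j \<noteq> j'"
    hence "1 \<le> \<bar>real j - real j'\<bar>" by linarith
    moreover have "s j - s j' = 2 * h * (real j - real j')" by (simp add: s_def algebra_simps)
    ultimately have "2 * h \<le> \<bar>s j - s j'\<bar>" using h by (simp add: abs_mult)
    moreover have "\<bar>s j - s j'\<bar> < 4*h/3" using that unfolding near_def by linarith
    ultimately show False using h by linarith
  qed
  define bad where "bad = {j. j < m \<and> (\<exists>z\<in>#R. near z j)}"
  have "bad \<subseteq> (\<lambda>z. THE j. near z j) ` set_mset R"
    unfolding bad_def using uniq by (auto intro!: image_eqI the_equality[symmetric])
  hence "card bad \<le> card (set_mset R)"
    by (meson card_image_le card_mono finite_imageI finite_set_mset order_trans)
  also have "\<dots> \<le> size R" by (induction R) (auto simp: card_insert_if)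
  finally have "card bad < m" using sz by linarith
  hence "\<not> {..<m} \<subseteq> bad"
    using card_mono[of bad "{..<m}"] unfolding bad_def by auto
  then obtain j where "j < m" "j \<notin> bad" by auto
  thus ?thesis unfolding bad_def near_def s_def by (fastforce simp: not_less)
qed

subsection \<open>The Laguerre factor\<close>

definition laguerre_factor :: "nat \<Rightarrow> real \<Rightarrow> nat \<Rightarrow> real \<Rightarrow> real" where
  "laguerre_factor m \<alpha> n u = laguerre (m - 1) (real n / 2) (u / \<alpha>^2 / real m)"

definition laguerre_factor_coeff :: "nat \<Rightarrow> real \<Rightarrow> nat \<Rightarrow> nat \<Rightarrow> real" where
  "laguerre_factor_coeff m \<alpha> n k =
     ((real (m - 1) + real n / 2) gchoose (m - 1 - k)) * (-1)^k / (fact k * (\<alpha>^2 * real m)^k)"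

lemma laguerre_factor_eq_sum:
  "laguerre_factor m \<alpha> n u = (\<Sum>k\<le>m-1. laguerre_factor_coeff m \<alpha> n k * u ^ k)"
  unfolding laguerre_factor_def laguerre_def laguerre_factor_coeff_def atLeast0AtMost
proof (rule sum.cong[OF refl])
  fix k
  have "(- (u / \<alpha>^2 / real m)) ^ k = (-1)^k * u^k / (\<alpha>^2 * real m)^k"
    by (simp add: power_minus' power_divide field_simps power_mult_distrib)
  thus "((real (m - 1) + real n / 2) gchoose (m - 1 - k)) * (- (u / \<alpha>\<^sup>2 / real m)) ^ k / fact k =
        ((real (m - 1) + real n / 2) gchoose (m - 1 - k)) * (- 1) ^ k / (fact k * (\<alpha>\<^sup>2 * real m) ^ k) * u ^ k"
    by (simp add: field_simps)
qed

lemma laguerre_factor_coeff_top: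
  "laguerre_factor_coeff m \<alpha> n (m - 1) = (-1)^(m-1) / (fact (m-1) * (\<alpha>^2 * real m)^(m-1))"
  by (simp add: laguerre_factor_coeff_def)

lemma laguerre_factor_sq_lower:
  assumes m: "1 \<le> m" and a: "0 < \<alpha>" and h: "0 < h"
  obtains c where "0 < c" "\<And>n. 1 \<le> n \<Longrightarrow> \<exists>j<m. \<forall>v. \<bar>v - (t1 + (2 * real j + 1) * h)\<bar> \<le> h/3
            \<longrightarrow> c \<le> (laguerre_factor m \<alpha> n (real n * v))\<^sup>2"
proof -
  define ct where "ct = 1 / (fact (m-1) * (\<alpha>^2 * real m)^(m-1))"
  have ctpos: "0 < ct" unfolding ct_def using m a by auto
  define c where "c = (ct * (h/3)^(m-1))\<^sup>2"
  have "\<exists>j<m. \<forall>v. \<bar>v - (t1 + (2 * real j + 1) * h)\<bar> \<le> h/3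
            \<longrightarrow> c \<le> (laguerre_factor m \<alpha> n (real n * v))\<^sup>2" if n: "1 \<le> n" for n
  proof -
    have top: "\<bar>laguerre_factor_coeff m \<alpha> n (m - 1)\<bar> = ct"
      unfolding laguerre_factor_coeff_top ct_def by simp
    have "laguerre_factor_coeff m \<alpha> n (m - 1) \<noteq> 0" using top ctpos by auto
    then obtain R :: "complex multiset" where sR: "size R = m - 1" and
      lb: "\<And>u h. 0 \<le> h \<Longrightarrow> (\<forall>z\<in>#R. h \<le> \<bar>u - Re z\<bar>) \<Longrightarrow>
          \<bar>laguerre_factor_coeff m \<alpha> n (m - 1)\<bar> * h ^ (m-1)
          \<le> \<bar>\<Sum>k\<le>m-1. laguerre_factor_coeff m \<alpha> n k * u ^ k\<bar>"
      using abs_poly_ge_distance_to_roots[of "laguerre_factor_coeff m \<alpha> n" "m - 1"] by blast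
    obtain j where j: "j < m" and
      far: "\<forall>z\<in>#R. 2*h/3 \<le> \<bar>Re z / real n - (t1 + (2 * real j + 1) * h)\<bar>"
      using exists_center_far_from_roots[of R m h n t1] sR m h by auto
    have "c \<le> (laguerre_factor m \<alpha> n (real n * v))\<^sup>2"
      if v: "\<bar>v - (t1 + (2 * real j + 1) * h)\<bar> \<le> h/3" for v
    proof -
      have "h/3 \<le> \<bar>real n * v - Re z\<bar>" if "z \<in># R" for z
      proof -
        have "2*h/3 \<le> \<bar>Re z / real n - (t1 + (2 * real j + 1) * h)\<bar>" using far that by blast
        hence "h/3 \<le> \<bar>v - Re z / real n\<bar>" using v by linarith
        also have "\<dots> \<le> real n * \<bar>v - Re z / real n\<bar>" using n by (simp add: mult_le_cancel_right1)
        also have "\<dots> = \<bar>real n * v - Re z\<bar>"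
        proof -
          have "real n * v - Re z = real n * (v - Re z / real n)" using n by (simp add: field_simps)
          thus ?thesis by (simp add: abs_mult)
        qed
        finally show ?thesis .
      qed
      hence "ct * (h/3) ^ (m-1) \<le> \<bar>laguerre_factor m \<alpha> n (real n * v)\<bar>"
        using lb[of "h/3"] h unfolding top laguerre_factor_eq_sum by simp
      moreover have "0 \<le> ct * (h/3) ^ (m-1)" using ctpos h by simp
      ultimately show ?thesis unfolding c_def by (metis abs_le_square_iff abs_of_nonneg)
    qed
    thus ?thesis using j by blast
  qed
  moreover have "0 < c" unfolding c_def using ctpos h by auto
  ultimately show ?thesis using that by blast
qed

lemma power_div_fact_le_exp:
  fixes y :: real assumes "0 \<le> y"
  shows "y ^ k / fact k \<le> exp y"
proof -
  have s: "(\<lambda>n. y^n /\<^sub>R fact n) sums exp y" by (rule exp_converges)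
  have "(\<Sum>n\<in>{k}. y^n /\<^sub>R fact n) \<le> (\<Sum>n. y^n /\<^sub>R fact n)"
    by (rule sum_le_suminf) (use s assms in \<open>auto simp: sums_iff\<close>)
  thus ?thesis using s by (simp add: sums_iff divide_inverse mult.commute)
qed

lemma abs_gbinomial_le:
  fixes r :: real assumes "0 \<le> r"
  shows "\<bar>r gchoose j\<bar> \<le> (r + real j) ^ j"
proof -
  have "\<bar>r gchoose j\<bar> = (\<Prod>i=0..<j. \<bar>r - of_nat i\<bar>) / fact j"
    by (simp add: gbinomial_prod_rev abs_divide abs_prod)
  also have "\<dots> \<le> (\<Prod>i=0..<j. \<bar>r - of_nat i\<bar>)"
    using divide_left_mono[of 1 "fact j" "\<Prod>i=0..<j. \<bar>r - of_nat i\<bar>"]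
    by (simp add: fact_ge_1 prod_nonneg)
  also have "\<dots> \<le> (\<Prod>i=0..<j. r + real j)"
    by (rule prod_mono) (use assms in auto)
  finally show ?thesis by simp
qed

lemma abs_laguerre_factor_term_le:
  assumes m: "1 \<le> m" and a: "0 < \<alpha>" and \<delta>: "0 < \<delta>" "\<delta> \<le> 1" and u: "0 \<le> u" and k: "k \<le> m - 1"
  shows "\<bar>laguerre_factor_coeff m \<alpha> n k * u ^ k\<bar>
    \<le> (real (2 * m) * (real n + 1)) ^ (m - 1) * ((1 / \<delta>) ^ (m - 1) * exp (\<delta> * u / (\<alpha>^2 * real m)))"
proof -
  define M where "M = m - 1"
  define y where "y = u / (\<alpha>^2 * real m)"
  have y: "0 \<le> y" unfolding y_def using u by simp
  define r where "r = real M + real n / 2"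
  have g: "\<bar>r gchoose (M - k)\<bar> \<le> (real (2 * m) * (real n + 1)) ^ M"
  proof -
    have "\<bar>r gchoose (M - k)\<bar> \<le> (r + real (M - k)) ^ (M - k)"
      by (rule abs_gbinomial_le) (simp add: r_def)
    also have "\<dots> \<le> (real (2 * m) * (real n + 1)) ^ (M - k)"
    proof (rule power_mono)
      have "r + real (M - k) \<le> 2 * real m + real n" unfolding r_def M_def by simp
      also have "\<dots> \<le> real (2 * m) * (real n + 1)"
      proof -
        have "real n \<le> real m * real n" using m by (simp add: mult_le_cancel_right1)
        thus ?thesis by (simp add: algebra_simps)
      qed
      finally show "r + real (M - k) \<le> real (2 * m) * (real n + 1)" .
    qed (simp add: r_def)
    also have "\<dots> \<le> (real (2 * m) * (real n + 1)) ^ M"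
    proof (rule power_increasing)
      show "1 \<le> real (2 * m) * (real n + 1)"
        using mult_mono[of 1 "real (2 * m)" 1 "real n + 1"] m by simp
    qed (simp add: M_def)
    finally show ?thesis .
  qed
  have yk: "y ^ k / fact k \<le> (1 / \<delta>) ^ M * exp (\<delta> * y)"
  proof -
    have "y ^ k / fact k = (1 / \<delta>) ^ k * ((\<delta> * y) ^ k / fact k)"
      using \<delta> by (simp add: power_mult_distrib field_simps)
    also have "\<dots> \<le> (1 / \<delta>) ^ M * exp (\<delta> * y)"
    proof (rule mult_mono)
      show "(1 / \<delta>) ^ k \<le> (1 / \<delta>) ^ M"
        using \<delta> k by (intro power_increasing) (auto simp: M_def field_simps)
      show "(\<delta> * y) ^ k / fact k \<le> exp (\<delta> * y)" using \<delta> y by (intro power_div_fact_le_exp) simp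
    qed (use \<delta> y in auto)
    finally show ?thesis .
  qed
  have "\<bar>laguerre_factor_coeff m \<alpha> n k * u ^ k\<bar> = \<bar>r gchoose (M - k)\<bar> * (y ^ k / fact k)"
    unfolding laguerre_factor_coeff_def r_def y_def M_def using u a m
    by (simp add: abs_mult abs_divide power_divide field_simps)
  also have "\<dots> \<le> (real (2 * m) * (real n + 1)) ^ M * ((1 / \<delta>) ^ M * exp (\<delta> * y))"
    by (rule mult_mono[OF g yk]) (use y in auto)
  finally show ?thesis unfolding M_def y_def by (simp add: mult.assoc)
qed

lemma abs_laguerre_factor_le:
  assumes m: "1 \<le> m" and a: "0 < \<alpha>" and \<delta>: "0 < \<delta>" "\<delta> \<le> 1" and u: "0 \<le> u"
  shows "\<bar>laguerre_factor m \<alpha> n u\<bar>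
    \<le> real m * real (2 * m) ^ (m - 1) * (1 / \<delta>) ^ (m - 1) * (real n + 1) ^ (m - 1)
      * exp (\<delta> * u / (\<alpha>^2 * real m))"
proof -
  have "\<bar>laguerre_factor m \<alpha> n u\<bar> \<le> (\<Sum>k\<le>m - 1. \<bar>laguerre_factor_coeff m \<alpha> n k * u ^ k\<bar>)"
    unfolding laguerre_factor_eq_sum by (rule sum_abs)
  also have "\<dots> \<le> (\<Sum>k\<le>m - 1. (real (2 * m) * (real n + 1)) ^ (m - 1)
      * ((1 / \<delta>) ^ (m - 1) * exp (\<delta> * u / (\<alpha>^2 * real m))))"
    by (rule sum_mono, rule abs_laguerre_factor_term_le) (use m a \<delta> u in auto)
  also have "\<dots> = real m * real (2 * m) ^ (m - 1) * (1 / \<delta>) ^ (m - 1) * (real n + 1) ^ (m - 1)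
      * exp (\<delta> * u / (\<alpha>^2 * real m))"
    using m by (simp add: power_mult_distrib)
  finally show ?thesis .
qed

lemma laguerre_factor_sq_le:
  assumes m: "1 \<le> m" and a: "0 < \<alpha>" and e: "0 < \<epsilon>"
  obtains C where "0 \<le> C"
    "\<And>n u. 0 \<le> u \<Longrightarrow> (laguerre_factor m \<alpha> n u)\<^sup>2 \<le> C * (real n + 1) ^ (2 * (m - 1)) * exp (\<epsilon> * u)"
proof -
  define A where "A = \<alpha>^2 * real m"
  have Apos: "0 < A" unfolding A_def using a m by auto
  define \<delta> where "\<delta> = min 1 (\<epsilon> * A / 2)"
  have \<delta>: "0 < \<delta>" "\<delta> \<le> 1" and d2: "2 * \<delta> \<le> \<epsilon> * A"
    unfolding \<delta>_def using e Apos by auto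
  define C0 where "C0 = real m * real (2 * m) ^ (m - 1) * (1 / \<delta>) ^ (m - 1)"
  have "(laguerre_factor m \<alpha> n u)\<^sup>2 \<le> C0\<^sup>2 * (real n + 1) ^ (2 * (m - 1)) * exp (\<epsilon> * u)"
    if u: "0 \<le> u" for n u
  proof -
    have "(laguerre_factor m \<alpha> n u)\<^sup>2 \<le> (C0 * (real n + 1) ^ (m - 1) * exp (\<delta> * u / A))\<^sup>2"
      using power_mono[OF abs_laguerre_factor_le[OF m a \<delta> u, of n] abs_ge_zero, of 2]
      unfolding C0_def A_def by simp
    also have "\<dots> = C0\<^sup>2 * (real n + 1) ^ (2 * (m - 1)) * exp (2 * \<delta> * u / A)"
    proof -
      have "exp (2 * \<delta> * u / A) = exp (\<delta> * u / A) * exp (\<delta> * u / A)"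
        by (simp add: exp_add[symmetric])
      moreover have "(real n + 1) ^ (2 * (m - 1)) = (real n + 1) ^ (m - 1) * (real n + 1) ^ (m - 1)"
        by (simp add: power_add[symmetric] mult_2)
      ultimately show ?thesis unfolding power2_eq_square by (simp only: ac_simps)
    qed
    also have "\<dots> \<le> C0\<^sup>2 * (real n + 1) ^ (2 * (m - 1)) * exp (\<epsilon> * u)"
    proof (rule mult_left_mono)
      have "2 * \<delta> * u / A \<le> \<epsilon> * A * u / A" using d2 u Apos by (intro divide_right_mono mult_right_mono) auto
      thus "exp (2 * \<delta> * u / A) \<le> exp (\<epsilon> * u)" using Apos by simp
    qed simp
    finally show ?thesis .
  qed
  thus ?thesis using that[of "C0\<^sup>2"] by simp
qed

subsection \<open>Exponential growth rates\<close>

text \<open>\<open>exp_rate_le f c\<close> and \<open>exp_rate_ge f c\<close> express \<open>limsup (ln f n)/n \<le> c\<close> and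
  \<open>liminf (ln f n)/n \<ge> c\<close>.\<close>
definition exp_rate_le :: "(nat \<Rightarrow> real) \<Rightarrow> real \<Rightarrow> bool" where
  "exp_rate_le f c \<longleftrightarrow> (\<forall>\<eta>>0. \<forall>\<^sub>F n in sequentially. f n \<le> exp (real n * (c + \<eta>)))"

definition exp_rate_ge :: "(nat \<Rightarrow> real) \<Rightarrow> real \<Rightarrow> bool" where
  "exp_rate_ge f c \<longleftrightarrow> (\<forall>\<eta>>0. \<forall>\<^sub>F n in sequentially. exp (real n * (c - \<eta>)) \<le> f n)"

lemma eventually_poly_le_exp:
  fixes C \<eta> :: real assumes "0 < \<eta>"
  shows "\<forall>\<^sub>F n in sequentially. C * (real n + 1) ^ k \<le> exp (real n * \<eta>)"
  using assms by real_asymp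

lemma exp_rate_le_approx:
  assumes "\<And>\<epsilon>. 0 < \<epsilon> \<Longrightarrow> exp_rate_le f (c + \<epsilon>)"
  shows "exp_rate_le f c"
  unfolding exp_rate_le_def
proof (intro allI impI)
  fix \<eta> :: real assume "0 < \<eta>"
  hence "\<forall>\<^sub>F n in sequentially. f n \<le> exp (real n * (c + \<eta>/2 + \<eta>/2))"
    using assms[of "\<eta>/2"] unfolding exp_rate_le_def by (meson half_gt_zero)
  thus "\<forall>\<^sub>F n in sequentially. f n \<le> exp (real n * (c + \<eta>))" by (simp add: add.commute)
qed

lemma exp_rate_ge_approx:
  assumes "\<And>\<epsilon>. 0 < \<epsilon> \<Longrightarrow> exp_rate_ge f (c - \<epsilon>)"
  shows "exp_rate_ge f c"
  unfolding exp_rate_ge_def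
proof (intro allI impI)
  fix \<eta> :: real assume "0 < \<eta>"
  hence "\<forall>\<^sub>F n in sequentially. exp (real n * (c - \<eta>/2 - \<eta>/2)) \<le> f n"
    using assms[of "\<eta>/2"] unfolding exp_rate_ge_def by (meson half_gt_zero)
  thus "\<forall>\<^sub>F n in sequentially. exp (real n * (c - \<eta>)) \<le> f n" by simp
qed

lemma exp_rate_le_mono:
  assumes "\<forall>\<^sub>F n in sequentially. f n \<le> g n" "exp_rate_le g c" "c \<le> c'"
  shows "exp_rate_le f c'"
  unfolding exp_rate_le_def
proof (intro allI impI)
  fix \<eta> :: real assume "0 < \<eta>"
  with assms(2) have "\<forall>\<^sub>F n in sequentially. g n \<le> exp (real n * (c + \<eta>))"
    by (auto simp: exp_rate_le_def)
  with assms(1) show "\<forall>\<^sub>F n in sequentially. f n \<le> exp (real n * (c' + \<eta>))"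
  proof eventually_elim
    case (elim n)
    have "exp (real n * (c + \<eta>)) \<le> exp (real n * (c' + \<eta>))"
      using assms(3) by (simp add: mult_left_mono)
    thus ?case using elim by linarith
  qed
qed

lemma exp_rate_ge_mono:
  assumes "\<forall>\<^sub>F n in sequentially. g n \<le> f n" "exp_rate_ge g c" "c' \<le> c"
  shows "exp_rate_ge f c'"
  unfolding exp_rate_ge_def
proof (intro allI impI)
  fix \<eta> :: real assume "0 < \<eta>"
  with assms(2) have "\<forall>\<^sub>F n in sequentially. exp (real n * (c - \<eta>)) \<le> g n"
    by (auto simp: exp_rate_ge_def)
  with assms(1) show "\<forall>\<^sub>F n in sequentially. exp (real n * (c' - \<eta>)) \<le> f n"
  proof eventually_elim
    case (elim n)
    have "exp (real n * (c' - \<eta>)) \<le> exp (real n * (c - \<eta>))"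
      using assms(3) by (simp add: mult_left_mono)
    thus ?case using elim by linarith
  qed
qed

lemma exp_rate_le_poly_exp:
  assumes q: "0 < q"
  shows "exp_rate_le (\<lambda>n. C * (real n + 1) ^ k * exp (\<kappa> * real n) * q ^ n) (\<kappa> + ln q)"
  unfolding exp_rate_le_def
proof (intro allI impI)
  fix \<eta> :: real assume "0 < \<eta>"
  from eventually_poly_le_exp[OF this, of C k]
  show "\<forall>\<^sub>F n in sequentially. C * (real n + 1) ^ k * exp (\<kappa> * real n) * q ^ n
      \<le> exp (real n * (\<kappa> + ln q + \<eta>))"
  proof eventually_elim
    case (elim n)
    have "C * (real n + 1) ^ k * exp (\<kappa> * real n) * q ^ n
        = (C * (real n + 1) ^ k) * exp (real n * (\<kappa> + ln q))"
    proof -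
      have "q ^ n = exp (real n * ln q)" using q by (simp add: exp_of_nat_mult)
      thus ?thesis by (simp add: exp_add[symmetric] algebra_simps)
    qed
    also have "\<dots> \<le> exp (real n * \<eta>) * exp (real n * (\<kappa> + ln q))"
      using elim by (intro mult_right_mono) auto
    also have "\<dots> = exp (real n * (\<kappa> + ln q + \<eta>))" by (simp add: exp_add[symmetric] algebra_simps)
    finally show ?case .
  qed
qed

lemma exp_rate_ge_const_exp:
  assumes c: "0 < C"
  shows "exp_rate_ge (\<lambda>n. C * exp (real n * B)) B"
  unfolding exp_rate_ge_def
proof (intro allI impI)
  fix \<eta> :: real assume "0 < \<eta>"
  from eventually_poly_le_exp[OF this, of "1 / C" 0]
  show "\<forall>\<^sub>F n in sequentially. exp (real n * (B - \<eta>)) \<le> C * exp (real n * B)"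
  proof eventually_elim
    case (elim n)
    hence "1 \<le> C * exp (real n * \<eta>)" using c by (simp add: field_simps)
    hence "exp (real n * (B - \<eta>)) \<le> C * exp (real n * \<eta>) * exp (real n * (B - \<eta>))" by simp
    also have "\<dots> = C * exp (real n * B)" by (simp add: exp_add[symmetric] algebra_simps)
    finally show ?case .
  qed
qed

lemma exp_rate_le_of_le_one:
  assumes "\<forall>\<^sub>F n in sequentially. f n \<le> 1"
  shows "exp_rate_le f 0"
  unfolding exp_rate_le_def
proof (intro allI impI)
  fix \<eta> :: real assume "0 < \<eta>"
  from assms show "\<forall>\<^sub>F n in sequentially. f n \<le> exp (real n * (0 + \<eta>))"
  proof eventually_elim
    case (elim n)
    have "1 \<le> exp (real n * (0 + \<eta>))" using \<open>0 < \<eta>\<close> by simp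
    thus ?case using elim by linarith
  qed
qed

lemma exp_rate_le_add:
  assumes "exp_rate_le f c" "exp_rate_le g c"
  shows "exp_rate_le (\<lambda>n. f n + g n) c"
  unfolding exp_rate_le_def
proof (intro allI impI)
  fix \<eta> :: real assume e: "0 < \<eta>"
  hence e2: "0 < \<eta>/2" by simp
  have "\<forall>\<^sub>F n in sequentially. 2 * (real n + 1) ^ 0 \<le> exp (real n * (\<eta>/2))"
    by (rule eventually_poly_le_exp[OF e2])
  moreover have "\<forall>\<^sub>F n in sequentially. f n \<le> exp (real n * (c + \<eta>/2))"
    using assms(1) e2 by (auto simp: exp_rate_le_def)
  moreover have "\<forall>\<^sub>F n in sequentially. g n \<le> exp (real n * (c + \<eta>/2))"
    using assms(2) e2 by (auto simp: exp_rate_le_def)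
  ultimately show "\<forall>\<^sub>F n in sequentially. f n + g n \<le> exp (real n * (c + \<eta>))"
  proof eventually_elim
    case (elim n)
    have "f n + g n \<le> 2 * exp (real n * (c + \<eta>/2))" using elim by linarith
    also have "\<dots> \<le> exp (real n * (\<eta>/2)) * exp (real n * (c + \<eta>/2))"
      using elim(1) by (intro mult_right_mono) auto
    also have "\<dots> = exp (real n * (c + \<eta>))" by (simp add: exp_add[symmetric] algebra_simps)
    finally show ?case .
  qed
qed

lemma exp_rate_le_divide:
  assumes "exp_rate_le f a" "exp_rate_ge g b"
  shows "exp_rate_le (\<lambda>n. f n / g n) (a - b)"
  unfolding exp_rate_le_def
proof (intro allI impI)
  fix \<eta> :: real assume "0 < \<eta>"
  hence e2: "0 < \<eta>/2" by simp
  have "\<forall>\<^sub>F n in sequentially. f n \<le> exp (real n * (a + \<eta>/2))"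
    using assms(1) e2 by (auto simp: exp_rate_le_def)
  moreover have "\<forall>\<^sub>F n in sequentially. exp (real n * (b - \<eta>/2)) \<le> g n"
    using assms(2) e2 by (auto simp: exp_rate_ge_def)
  ultimately show "\<forall>\<^sub>F n in sequentially. f n / g n \<le> exp (real n * (a - b + \<eta>))"
  proof eventually_elim
    case (elim n)
    have gpos: "0 < g n" using elim(2) by (meson exp_gt_zero less_le_trans)
    have "f n / g n \<le> exp (real n * (a + \<eta>/2)) / g n"
      using elim(1) gpos by (simp add: divide_right_mono)
    also have "\<dots> \<le> exp (real n * (a + \<eta>/2)) / exp (real n * (b - \<eta>/2))"
      using elim(2) gpos by (intro divide_left_mono) auto
    also have "\<dots> = exp (real n * (a - b + \<eta>))" by (simp add: exp_diff[symmetric] algebra_simps)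
    finally show ?case .
  qed
qed

lemma exp_rate_ge_divide:
  assumes "exp_rate_ge f a" "exp_rate_le g b" "\<forall>\<^sub>F n in sequentially. 0 < g n"
  shows "exp_rate_ge (\<lambda>n. f n / g n) (a - b)"
  unfolding exp_rate_ge_def
proof (intro allI impI)
  fix \<eta> :: real assume "0 < \<eta>"
  hence e2: "0 < \<eta>/2" by simp
  have "\<forall>\<^sub>F n in sequentially. exp (real n * (a - \<eta>/2)) \<le> f n"
    using assms(1) e2 by (auto simp: exp_rate_ge_def)
  moreover have "\<forall>\<^sub>F n in sequentially. g n \<le> exp (real n * (b + \<eta>/2))"
    using assms(2) e2 by (auto simp: exp_rate_le_def)
  ultimately show "\<forall>\<^sub>F n in sequentially. exp (real n * (a - b - \<eta>)) \<le> f n / g n"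
    using assms(3)
  proof eventually_elim
    case (elim n)
    have "exp (real n * (a - b - \<eta>)) = exp (real n * (a - \<eta>/2)) / exp (real n * (b + \<eta>/2))"
      by (simp add: exp_diff[symmetric] algebra_simps)
    also have "\<dots> \<le> f n / exp (real n * (b + \<eta>/2))" using elim(1) by (simp add: divide_right_mono)
    also have "\<dots> \<le> f n / g n" using elim
      by (intro divide_left_mono) (auto intro: order_trans[OF _ elim(1)])
    finally show ?case .
  qed
qed

lemma liminf_ge_of_exp_rate_ge:
  assumes "exp_rate_ge f c"
  shows "ereal c \<le> liminf (\<lambda>n. ereal (1 / real n) * ln_ereal (f n))"
proof (rule ereal_le_epsilon2)
  fix e :: real assume e: "0 < e"
  have "\<forall>\<^sub>F n in sequentially. exp (real n * (c - e)) \<le> f n"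
    using assms e by (auto simp: exp_rate_ge_def)
  hence "\<forall>\<^sub>F n in sequentially. ereal (c - e) \<le> ereal (1 / real n) * ln_ereal (f n)"
    using eventually_ge_at_top[of 1]
  proof eventually_elim
    case (elim n)
    have fpos: "0 < f n" using elim(1) by (meson exp_gt_zero less_le_trans)
    have "real n * (c - e) \<le> ln (f n)" using elim(1) fpos by (metis ln_exp ln_le_cancel_iff exp_gt_zero)
    hence "c - e \<le> ln (f n) / real n" using elim(2) by (simp add: field_simps)
    thus ?case using fpos by (simp add: ln_ereal_def)
  qed
  hence "ereal (c - e) \<le> liminf (\<lambda>n. ereal (1 / real n) * ln_ereal (f n))" by (rule Liminf_bounded)
  thus "ereal c \<le> liminf (\<lambda>n. ereal (1 / real n) * ln_ereal (f n)) + ereal e"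
    by (cases "liminf (\<lambda>n. ereal (1 / real n) * ln_ereal (f n))") auto
qed

lemma limsup_le_of_exp_rate_le:
  assumes "exp_rate_le f c"
  shows "limsup (\<lambda>n. ereal (1 / real n) * ln_ereal (f n)) \<le> ereal c"
proof (rule ereal_le_epsilon2)
  fix e :: real assume e: "0 < e"
  have "\<forall>\<^sub>F n in sequentially. f n \<le> exp (real n * (c + e))"
    using assms e by (auto simp: exp_rate_le_def)
  hence "\<forall>\<^sub>F n in sequentially. ereal (1 / real n) * ln_ereal (f n) \<le> ereal (c + e)"
    using eventually_ge_at_top[of 1]
  proof eventually_elim
    case (elim n)
    show ?case
    proof (cases "0 < f n")
      case True
      have "ln (f n) \<le> real n * (c + e)" using elim(1) True by (metis ln_exp ln_le_cancel_iff exp_gt_zero)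
      hence "ln (f n) / real n \<le> c + e" using elim(2) by (simp add: field_simps)
      thus ?thesis using True by (simp add: ln_ereal_def)
    qed (use elim in \<open>simp add: ln_ereal_def\<close>)
  qed
  hence "limsup (\<lambda>n. ereal (1 / real n) * ln_ereal (f n)) \<le> ereal (c + e)" by (rule Limsup_bounded)
  thus "limsup (\<lambda>n. ereal (1 / real n) * ln_ereal (f n)) \<le> ereal c + ereal e" by simp
qed

subsection \<open>Gaussian mass of thin shells\<close>

lemma exp_le_indicator_plus_tails:
  fixes u N s r a \<mu> :: real
  assumes N: "0 < N" and \<mu>: "0 \<le> \<mu>"
  shows "exp (- a * u) \<le> indicator {s - r .. s + r} (u / N) * exp (- a * u)
        + exp (- \<mu> * (s + r) * N) * exp (- (a - \<mu>) * u)
        + exp (\<mu> * (s - r) * N) * exp (- (a + \<mu>) * u)"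
proof (cases "u / N \<in> {s - r .. s + r}")
  case False
  hence "u < N * (s - r) \<or> N * (s + r) < u" using N by (auto simp: field_simps)
  thus ?thesis
  proof
    assume "u < N * (s - r)"
    hence "- a * u \<le> \<mu> * (s - r) * N + - (a + \<mu>) * u"
      using mult_left_mono[of u "N * (s - r)" \<mu>] \<mu> by (simp add: algebra_simps)
    hence "exp (- a * u) \<le> exp (\<mu> * (s - r) * N) * exp (- (a + \<mu>) * u)"
      by (simp add: exp_add[symmetric])
    thus ?thesis by (simp add: add_increasing)
  next
    assume "N * (s + r) < u"
    hence "- a * u \<le> - \<mu> * (s + r) * N + - (a - \<mu>) * u"
      using mult_left_mono[of "N * (s + r)" u \<mu>] \<mu> by (simp add: algebra_simps)
    hence "exp (- a * u) \<le> exp (- \<mu> * (s + r) * N) * exp (- (a - \<mu>) * u)"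
      by (simp add: exp_add[symmetric])
    thus ?thesis by (simp add: add_increasing add_increasing2)
  qed
qed simp

text \<open>With the Chernoff parameter \<open>\<mu> = \<theta>/(2s)\<close>, \<open>\<theta> = r/(4s)\<close>, each of the two tails
  \<open>|x|\<^sup>2/n < s - r\<close> and \<open>|x|\<^sup>2/n > s + r\<close> of the Gaussian \<open>exp(-|x|\<^sup>2/(2s))\<close> is smaller than its
  total mass by at least the factor \<open>exp(-\<theta>\<^sup>2)\<close> per coordinate.\<close>
lemma chernoff_factors_le:
  assumes s: "0 < s" and r: "0 < r" "r < s"
  defines "\<mu> \<equiv> r / (8 * s\<^sup>2)"
  shows "exp (- \<mu> * (s + r)) * sqrt (pi / (1 / (2 * s) - \<mu>))
           \<le> sqrt (2 * pi * s) * exp (- (r / s)\<^sup>2 / 16)"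
    and "exp (\<mu> * (s - r)) * sqrt (pi / (1 / (2 * s) + \<mu>))
           \<le> sqrt (2 * pi * s) * exp (- (r / s)\<^sup>2 / 16)"
proof -
  define \<theta> where "\<theta> = r / (4 * s)"
  have t: "0 < \<theta>" "\<theta> < 1/4" using s r by (auto simp: \<theta>_def field_simps)
  have factor: "exp c * sqrt (pi / ((1 + \<epsilon>) / (2 * s)))
      = sqrt (2 * pi * s) * exp (c - ln (1 + \<epsilon>) / 2)" if "-1 < \<epsilon>" for c \<epsilon>
  proof -
    have "sqrt (pi / ((1 + \<epsilon>) / (2 * s))) = sqrt (2 * pi * s) * sqrt (1 / (1 + \<epsilon>))"
      using s that by (simp add: real_sqrt_mult[symmetric] field_simps)
    also have "sqrt (1 / (1 + \<epsilon>)) = exp (ln (1 / (1 + \<epsilon>)) / 2)"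
      using that by (simp add: powr_half_sqrt[symmetric] powr_def)
    finally show ?thesis using that by (simp add: ln_div exp_add[symmetric] mult.left_commute)
  qed
  have lam: "1 / (2 * s) - \<mu> = (1 + - \<theta>) / (2 * s)" "1 / (2 * s) + \<mu> = (1 + \<theta>) / (2 * s)"
    using s by (simp_all add: \<mu>_def \<theta>_def power2_eq_square field_simps)
  have e: "- \<mu> * (s + r) = (- 1/2 - 2 * \<theta>) * \<theta>" "\<mu> * (s - r) = (1/2 - 2 * \<theta>) * \<theta>"
    "- (r / s)\<^sup>2 / 16 = - \<theta>\<^sup>2"
    using s by (simp_all add: \<mu>_def \<theta>_def power2_eq_square field_simps)
  have t1: "- 1 < - \<theta>" and t2: "- 1 < \<theta>" using t by simp_all
  have "- \<theta> - 2 * \<theta>\<^sup>2 \<le> ln (1 - \<theta>)" by (rule ln_one_minus_pos_lower_bound) (use t in auto)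
  hence "(- 1/2 - 2 * \<theta>) * \<theta> - ln (1 + - \<theta>) / 2 \<le> - \<theta>\<^sup>2"
    by (simp add: power2_eq_square algebra_simps)
  thus "exp (- \<mu> * (s + r)) * sqrt (pi / (1 / (2 * s) - \<mu>))
           \<le> sqrt (2 * pi * s) * exp (- (r / s)\<^sup>2 / 16)"
    unfolding lam e factor[of "- \<theta>", OF t1] using s by (intro mult_left_mono) auto
  have "\<theta> - \<theta>\<^sup>2 \<le> ln (1 + \<theta>)" by (rule ln_one_plus_pos_lower_bound) (use t in auto)
  hence "\<theta> - 2 * \<theta>\<^sup>2 \<le> ln (1 + \<theta>)" using zero_le_power2[of \<theta>] by linarith
  hence "(1/2 - 2 * \<theta>) * \<theta> - ln (1 + \<theta>) / 2 \<le> - \<theta>\<^sup>2"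
    by (simp add: power2_eq_square algebra_simps)
  thus "exp (\<mu> * (s - r)) * sqrt (pi / (1 / (2 * s) + \<mu>))
           \<le> sqrt (2 * pi * s) * exp (- (r / s)\<^sup>2 / 16)"
    unfolding lam e factor[of \<theta>, OF t2] using s by (intro mult_left_mono) auto
qed

lemma gaussian_mass_le_shell_plus_tails:
  assumes n: "1 \<le> n" and \<mu>: "0 < \<mu>" "\<mu> < a"
  shows "ennreal (sqrt (pi / a) ^ n) \<le> (\<integral>\<^sup>+x. ennreal (indicator {s - r .. s + r} (sqnorm n x / real n)
        * exp (- a * sqnorm n x)) \<partial>Rn n)
      + ennreal ((exp (- \<mu> * (s + r)) * sqrt (pi / (a - \<mu>))) ^ n)
      + ennreal ((exp (\<mu> * (s - r)) * sqrt (pi / (a + \<mu>))) ^ n)"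
proof -
  have tail: "(\<integral>\<^sup>+x. ennreal (exp (c * real n) * exp (- b * sqnorm n x)) \<partial>Rn n)
      = ennreal ((exp c * sqrt (pi / b)) ^ n)" if "0 < b" for b c
    using nn_integral_exp_neg_sqnorm[OF that, of "exp (c * real n)" n]
    by (simp add: power_mult_distrib exp_of_nat_mult[symmetric] mult.commute)
  have pw: "ennreal (exp (- a * sqnorm n x))
      \<le> ennreal (indicator {s - r .. s + r} (sqnorm n x / real n) * exp (- a * sqnorm n x))
        + ennreal (exp (- \<mu> * (s + r) * real n) * exp (- (a - \<mu>) * sqnorm n x))
        + ennreal (exp (\<mu> * (s - r) * real n) * exp (- (a + \<mu>) * sqnorm n x))" for x
    using ennreal_leI[OF exp_le_indicator_plus_tails[of "real n" \<mu> a "sqnorm n x" s r]] n \<mu>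
    by (simp add: ennreal_plus)
  have "ennreal (sqrt (pi / a) ^ n) = (\<integral>\<^sup>+x. ennreal (1 * exp (- a * sqnorm n x)) \<partial>Rn n)"
    using nn_integral_exp_neg_sqnorm[of a 1 n] \<mu> by simp
  also have "\<dots> \<le> (\<integral>\<^sup>+x. ennreal (indicator {s - r .. s + r} (sqnorm n x / real n) * exp (- a * sqnorm n x))
        + ennreal (exp (- \<mu> * (s + r) * real n) * exp (- (a - \<mu>) * sqnorm n x))
        + ennreal (exp (\<mu> * (s - r) * real n) * exp (- (a + \<mu>) * sqnorm n x)) \<partial>Rn n)"
    using nn_integral_mono[OF pw] by simp
  also have "\<dots> = (\<integral>\<^sup>+x. ennreal (indicator {s - r .. s + r} (sqnorm n x / real n)
        * exp (- a * sqnorm n x)) \<partial>Rn n)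
      + (\<integral>\<^sup>+x. ennreal (exp (- \<mu> * (s + r) * real n) * exp (- (a - \<mu>) * sqnorm n x)) \<partial>Rn n)
      + (\<integral>\<^sup>+x. ennreal (exp (\<mu> * (s - r) * real n) * exp (- (a + \<mu>) * sqnorm n x)) \<partial>Rn n)"
    by (subst nn_integral_add; (subst nn_integral_add)?) auto
  finally show ?thesis
    using tail[of "a - \<mu>" "- \<mu> * (s + r)"] tail[of "a + \<mu>" "\<mu> * (s - r)"] \<mu> by simp
qed

lemma gaussian_shell_lower:
  assumes s: "0 < s" and r: "0 < r" "r < s"
  shows "\<forall>\<^sub>F n in sequentially. ennreal (sqrt (2 * pi * s) ^ n / 2) \<le>
     (\<integral>\<^sup>+x. ennreal (indicator {s - r .. s + r} (sqnorm n x / real n)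
        * exp (- (1 / (2 * s)) * sqnorm n x)) \<partial>Rn n)"
proof -
  define a where "a = 1 / (2 * s)"
  define \<mu> where "\<mu> = r / (8 * s\<^sup>2)"
  define S where "S = sqrt (2 * pi * s)"
  define q where "q = exp (- (r / s)\<^sup>2 / 16)"
  define q1 where "q1 = exp (- \<mu> * (s + r)) * sqrt (pi / (a - \<mu>))"
  define q2 where "q2 = exp (\<mu> * (s - r)) * sqrt (pi / (a + \<mu>))"
  have \<mu>: "0 < \<mu>" "\<mu> < a"
    using s r by (auto simp: \<mu>_def a_def power2_eq_square field_simps)
  have S: "0 < S" "S = sqrt (pi / a)" using s by (simp_all add: S_def a_def real_sqrt_mult mult_ac)
  have q12: "0 \<le> q1" "q1 \<le> S * q" "0 \<le> q2" "q2 \<le> S * q"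
    using chernoff_factors_le[OF s r] \<mu>
    unfolding q1_def q2_def S_def q_def \<mu>_def a_def by auto
  have "(\<lambda>n. q ^ n) \<longlonglongrightarrow> 0" using s r by (intro LIMSEQ_power_zero) (simp add: q_def)
  hence "\<forall>\<^sub>F n in sequentially. q ^ n < 1/4" by (rule order_tendstoD) simp
  with eventually_ge_at_top[of 1] show ?thesis
  proof eventually_elim
    case (elim n)
    define I where "I = (\<integral>\<^sup>+x. ennreal (indicator {s - r .. s + r} (sqnorm n x / real n)
        * exp (- a * sqnorm n x)) \<partial>Rn n)"
    have total: "ennreal (S ^ n) \<le> I + (ennreal (q1 ^ n) + ennreal (q2 ^ n))"
      using gaussian_mass_le_shell_plus_tails[OF elim(1) \<mu>, of s r]
      unfolding I_def q1_def q2_def S(2) by (simp add: add.assoc)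
    have "q1 ^ n + q2 ^ n \<le> (S * q) ^ n + (S * q) ^ n"
      using q12 by (intro add_mono power_mono) auto
    also have "\<dots> = S ^ n * (2 * q ^ n)" by (simp add: power_mult_distrib)
    also have "\<dots> \<le> S ^ n * (1/2)" using elim(2) S by (intro mult_left_mono) auto
    finally have "ennreal (q1 ^ n) + ennreal (q2 ^ n) \<le> ennreal (S ^ n / 2)"
      using q12 by (simp add: ennreal_plus[symmetric] ennreal_leI del: ennreal_plus)
    hence "ennreal (S ^ n / 2) + ennreal (S ^ n / 2) \<le> I + ennreal (S ^ n / 2)"
      using total S by (simp add: ennreal_plus[symmetric] del: ennreal_plus)
        (meson add_left_mono order_trans)
    hence "ennreal (S ^ n / 2) \<le> I"
      by (simp add: add.commute ennreal_add_left_cancel_le)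
    thus ?case unfolding I_def S_def a_def .
  qed
qed

lemma interval_around_square_subset:
  fixes A :: "real set"
  assumes "x \<in> interior A" "0 < x"
  obtains \<delta> where "0 < \<delta>" "{x\<^sup>2 - \<delta><..<x\<^sup>2 + \<delta>} \<subseteq> {v. sqrt v \<in> A}"
proof -
  have "open (sqrt -` interior A)"
    by (rule continuous_open_vimage) (auto intro: continuous_intros)
  moreover have "x\<^sup>2 \<in> sqrt -` interior A" using assms by simp
  ultimately obtain \<delta> where "0 < \<delta>" "ball (x\<^sup>2) \<delta> \<subseteq> sqrt -` interior A"
    by (meson openE)
  thus ?thesis using that interior_subset[of A] by (auto simp: ball_eq_greaterThanLessThan)
qed

lemma ereal_le_uminus_if_real_bounds:
  fixes L I :: ereal
  assumes "\<And>K. ereal K < I \<Longrightarrow> L \<le> ereal (- K)"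
  shows "L \<le> - I"
proof (rule ccontr)
  assume "\<not> L \<le> - I"
  hence "- L < I" by (simp add: ereal_uminus_less_reorder)
  then obtain K where K: "- L < ereal K" "ereal K < I" using ereal_dense2 by blast
  hence "ereal K \<le> - L" using assms[of K] ereal_minus_le_minus[of "ereal (- K)" L] by simp
  thus False using K(1) by simp
qed

subsection \<open>Exponential rates of the unnormalised shell masses\<close>

locale laguerre_density =
  fixes m :: nat and \<alpha> :: real
  assumes m_pos: "1 \<le> m" and \<alpha>_pos: "0 < \<alpha>"
begin

definition c0 :: real where "c0 = 2 / (\<alpha>^2 * real m)"

definition weight :: "nat \<Rightarrow> (nat \<Rightarrow> real) \<Rightarrow> real" where
  "weight n x = (laguerre_factor m \<alpha> n (sqnorm n x))\<^sup>2 * exp (- c0 * sqnorm n x)"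

definition shell_nn :: "nat \<Rightarrow> real set \<Rightarrow> ennreal" where
  "shell_nn n B = (\<integral>\<^sup>+x. ennreal (indicator B (sqnorm n x / real n) * weight n x) \<partial>Rn n)"

definition shell_mass :: "nat \<Rightarrow> real set \<Rightarrow> real" where
  "shell_mass n B = enn2real (shell_nn n B)"

text \<open>The Gaussian \<open>exp(-c\<^sub>0|x|\<^sup>2)\<close> gives \<open>{x. |x|\<^sup>2/n \<approx> s}\<close> the mass
  \<open>exp(n \<phi>(s) + o(n))\<close>: the surface factor is \<open>(2\<pi>e s)^(n/2)\<close> up to subexponential terms.\<close>
definition phi :: "real \<Rightarrow> real" where
  "phi s = ln (2 * pi * s) / 2 - c0 * s + 1/2"

lemma c0_pos: "0 < c0" unfolding c0_def using m_pos \<alpha>_pos by simp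

lemma weight_nonneg: "0 \<le> weight n x" unfolding weight_def by simp

lemma measurable_weight[measurable]: "weight n \<in> borel_measurable (Rn n)"
  unfolding weight_def laguerre_factor_eq_sum by measurable

lemma shell_nn_le_gaussian:
  assumes C: "0 \<le> C" "\<And>u. 0 \<le> u \<Longrightarrow> (laguerre_factor m \<alpha> n u)\<^sup>2 \<le> C * exp (\<epsilon> * u)"
    and b: "0 < c0 - \<epsilon> - \<mu>"
    and B: "\<And>x. indicator B (sqnorm n x / real n) \<le> exp (\<mu> * sqnorm n x + \<kappa> * real n)"
  shows "shell_nn n B \<le> ennreal (C * exp (\<kappa> * real n) * sqrt (pi / (c0 - \<epsilon> - \<mu>)) ^ n)"
proof -
  have "indicator B (sqnorm n x / real n) * weight n x
      \<le> C * exp (\<kappa> * real n) * exp (- (c0 - \<epsilon> - \<mu>) * sqnorm n x)" for x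
  proof -
    have "indicator B (sqnorm n x / real n) * weight n x
        \<le> exp (\<mu> * sqnorm n x + \<kappa> * real n) * ((C * exp (\<epsilon> * sqnorm n x)) * exp (- c0 * sqnorm n x))"
      unfolding weight_def using B[of x] C(2)[OF sqnorm_nonneg] C(1)
      by (intro mult_mono) (auto simp: indicator_def)
    also have "\<dots> = C * exp (\<kappa> * real n) * exp (- (c0 - \<epsilon> - \<mu>) * sqnorm n x)"
      by (simp add: exp_add[symmetric] algebra_simps)
    finally show ?thesis .
  qed
  hence "shell_nn n B \<le> (\<integral>\<^sup>+x. ennreal (C * exp (\<kappa> * real n) * exp (- (c0 - \<epsilon> - \<mu>) * sqnorm n x)) \<partial>Rn n)"
    unfolding shell_nn_def by (intro nn_integral_mono ennreal_leI)
  also have "\<dots> = ennreal (C * exp (\<kappa> * real n) * sqrt (pi / (c0 - \<epsilon> - \<mu>)) ^ n)"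
    by (rule nn_integral_exp_neg_sqnorm[OF b]) (use C in simp)
  finally show ?thesis .
qed

lemma shell_nn_finite: "shell_nn n B < \<infinity>"
proof -
  have e: "0 < c0 / 2" using c0_pos by simp
  obtain C where "0 \<le> C"
    "\<And>u. 0 \<le> u \<Longrightarrow> (laguerre_factor m \<alpha> n u)\<^sup>2 \<le> C * (real n + 1) ^ (2 * (m - 1)) * exp (c0 / 2 * u)"
    using laguerre_factor_sq_le[OF m_pos \<alpha>_pos e] by metis
  hence "shell_nn n B \<le> ennreal (C * (real n + 1) ^ (2 * (m - 1)) * exp (0 * real n)
      * sqrt (pi / (c0 - c0 / 2 - 0)) ^ n)"
    by (intro shell_nn_le_gaussian) (use c0_pos in \<open>auto simp: indicator_def\<close>)
  also have "\<dots> < \<infinity>" by simp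
  finally show ?thesis .
qed

lemma shell_mass_mono: "B \<subseteq> B' \<Longrightarrow> shell_mass n B \<le> shell_mass n B'"
  unfolding shell_mass_def shell_nn_def using weight_nonneg shell_nn_finite[unfolded shell_nn_def]
  by (intro enn2real_mono nn_integral_mono ennreal_leI mult_right_mono) (auto simp: indicator_def)

lemma shell_mass_exp_rate_le:
  assumes \<beta>: "0 < \<beta>"
    and B: "\<And>n x. 1 \<le> n \<Longrightarrow> indicator B (sqnorm n x / real n) \<le> exp ((c0 - \<beta>) * sqnorm n x + \<kappa> * real n)"
  shows "exp_rate_le (\<lambda>n. shell_mass n B) (\<kappa> + ln (pi / \<beta>) / 2)"
proof (rule exp_rate_le_approx)
  fix \<epsilon>' :: real assume e': "0 < \<epsilon>'"
  define \<epsilon> where "\<epsilon> = \<beta> * (1 - exp (- 2 * \<epsilon>'))"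
  have epos: "0 < \<epsilon>" unfolding \<epsilon>_def using \<beta> e' by simp
  have bm: "\<beta> - \<epsilon> = \<beta> * exp (- 2 * \<epsilon>')" unfolding \<epsilon>_def by (simp add: algebra_simps)
  have bmpos: "0 < \<beta> - \<epsilon>" unfolding bm using \<beta> by simp
  obtain C where C0: "C \<ge> 0" and
    C: "\<And>n u. 0 \<le> u \<Longrightarrow> (laguerre_factor m \<alpha> n u)\<^sup>2 \<le> C * (real n + 1) ^ (2 * (m - 1)) * exp (\<epsilon> * u)"
    using laguerre_factor_sq_le[OF m_pos \<alpha>_pos epos] by blast
  have "ln (sqrt (pi / (\<beta> - \<epsilon>))) = ln (pi / \<beta>) / 2 + \<epsilon>'"
    using \<beta> bmpos unfolding bm by (simp add: ln_sqrt ln_div ln_mult)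
  hence rate: "exp_rate_le (\<lambda>n. C * (real n + 1) ^ (2 * (m - 1)) * exp (\<kappa> * real n) * sqrt (pi / (\<beta> - \<epsilon>)) ^ n)
      (\<kappa> + ln (pi / \<beta>) / 2 + \<epsilon>')"
    using exp_rate_le_poly_exp[of "sqrt (pi / (\<beta> - \<epsilon>))"] bmpos by (simp add: add.assoc)
  have "\<forall>\<^sub>F n in sequentially. shell_mass n B
      \<le> C * (real n + 1) ^ (2 * (m - 1)) * exp (\<kappa> * real n) * sqrt (pi / (\<beta> - \<epsilon>)) ^ n"
    using eventually_ge_at_top[of 1]
  proof eventually_elim
    case (elim n)
    have "shell_nn n B \<le> ennreal (C * (real n + 1) ^ (2 * (m - 1)) * exp (\<kappa> * real n)
        * sqrt (pi / (c0 - \<epsilon> - (c0 - \<beta>))) ^ n)"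
      by (rule shell_nn_le_gaussian) (use C0 C bmpos B elim in auto)
    thus ?case unfolding shell_mass_def using C0 bmpos by (intro enn2real_leI) auto
  qed
  thus "exp_rate_le (\<lambda>n. shell_mass n B) (\<kappa> + ln (pi / \<beta>) / 2 + \<epsilon>')"
    using rate by (rule exp_rate_le_mono) simp
qed

lemma total_mass_exp_rate_le: "exp_rate_le (\<lambda>n. shell_mass n UNIV) (ln (pi / c0) / 2)"
  using shell_mass_exp_rate_le[of c0 UNIV 0] c0_pos by simp

lemma upper_tail_exp_rate_le:
  assumes b: "0 < b" "1 < 2 * c0 * b"
  shows "exp_rate_le (\<lambda>n. shell_mass n {b..}) (phi b)"
proof -
  define \<mu> where "\<mu> = c0 - 1 / (2 * b)"
  have \<mu>: "0 < \<mu>" unfolding \<mu>_def using b by (simp add: field_simps)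
  have "exp_rate_le (\<lambda>n. shell_mass n {b..}) (- \<mu> * b + ln (pi / (1 / (2 * b))) / 2)"
  proof (rule shell_mass_exp_rate_le)
    fix n :: nat and x assume n: "1 \<le> n"
    show "indicator {b..} (sqnorm n x / real n)
        \<le> exp ((c0 - 1 / (2 * b)) * sqnorm n x + - \<mu> * b * real n)"
    proof (cases "b \<le> sqnorm n x / real n")
      case True
      hence "real n * b \<le> sqnorm n x" using n by (simp add: field_simps)
      hence "\<mu> * (real n * b) \<le> \<mu> * sqnorm n x" using \<mu> by (intro mult_left_mono) auto
      hence "0 \<le> (c0 - 1 / (2 * b)) * sqnorm n x + - \<mu> * b * real n"
        unfolding \<mu>_def[symmetric] by (simp add: algebra_simps)
      thus ?thesis by (simp add: indicator_def)
    qed (simp add: indicator_def)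
  qed (use b in simp)
  moreover have "- \<mu> * b + ln (pi / (1 / (2 * b))) / 2 = phi b"
    unfolding \<mu>_def phi_def using b by (simp add: field_simps)
  ultimately show ?thesis by simp
qed

lemma lower_tail_exp_rate_le:
  assumes b: "0 < b" "2 * c0 * b < 1"
  shows "exp_rate_le (\<lambda>n. shell_mass n {..b}) (phi b)"
proof -
  define \<mu> where "\<mu> = 1 / (2 * b) - c0"
  have \<mu>: "0 < \<mu>" unfolding \<mu>_def using b by (simp add: field_simps)
  have "exp_rate_le (\<lambda>n. shell_mass n {..b}) (\<mu> * b + ln (pi / (1 / (2 * b))) / 2)"
  proof (rule shell_mass_exp_rate_le)
    fix n :: nat and x assume n: "1 \<le> n"
    show "indicator {..b} (sqnorm n x / real n) \<le> exp ((c0 - 1 / (2 * b)) * sqnorm n x + \<mu> * b * real n)"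
    proof (cases "sqnorm n x / real n \<le> b")
      case True
      hence "sqnorm n x \<le> real n * b" using n by (simp add: field_simps)
      hence "\<mu> * sqnorm n x \<le> \<mu> * (real n * b)" using \<mu> by (intro mult_left_mono) auto
      hence "0 \<le> - \<mu> * sqnorm n x + \<mu> * b * real n" by (simp add: algebra_simps)
      moreover have "c0 - 1 / (2 * b) = - \<mu>" unfolding \<mu>_def by simp
      ultimately have "0 \<le> (c0 - 1 / (2 * b)) * sqnorm n x + \<mu> * b * real n" by (simp only:)
      thus ?thesis by (simp add: indicator_def)
    qed (simp add: indicator_def)
  qed (use b in simp)
  moreover have "\<mu> * b + ln (pi / (1 / (2 * b))) / 2 = phi b"
    unfolding \<mu>_def phi_def using b by (simp add: field_simps)
  ultimately show ?thesis by simp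
qed

lemma shell_nn_ge_gaussian_shell:
  assumes n: "1 \<le> n" and s: "0 < s" and sub: "{s - r .. s + r} \<subseteq> B"
    and c: "0 < c" and L: "\<And>v. \<bar>v - s\<bar> \<le> r \<Longrightarrow> c \<le> (laguerre_factor m \<alpha> n (real n * v))\<^sup>2"
  defines "K \<equiv> (c0 - 1 / (2 * s)) * s + \<bar>c0 - 1 / (2 * s)\<bar> * r"
  shows "ennreal (c * exp (- K * real n)) * (\<integral>\<^sup>+x. ennreal (indicator {s - r .. s + r} (sqnorm n x / real n)
      * exp (- (1 / (2 * s)) * sqnorm n x)) \<partial>Rn n) \<le> shell_nn n B"
proof -
  have npos: "0 < real n" using n by simp
  have "ennreal (c * exp (- K * real n)) * ennreal (indicator {s - r .. s + r} (sqnorm n x / real n)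
      * exp (- (1 / (2 * s)) * sqnorm n x)) \<le> ennreal (indicator B (sqnorm n x / real n) * weight n x)" for x
  proof (cases "sqnorm n x / real n \<in> {s - r .. s + r}")
    case True
    define u where "u = sqnorm n x"
    define v where "v = u / real n"
    have uv: "u = real n * v" unfolding v_def using npos by simp
    have vr: "\<bar>v - s\<bar> \<le> r" using True unfolding v_def u_def by auto
    define a where "a = 1 / (2 * s)"
    have "u - real n * s = real n * (v - s)" unfolding uv by (simp add: algebra_simps)
    hence "(c0 - a) * (u - real n * s) \<le> \<bar>c0 - a\<bar> * (real n * \<bar>v - s\<bar>)"
      using abs_ge_self[of "(c0 - a) * (u - real n * s)"] npos by (simp add: abs_mult)
    also have "\<dots> \<le> \<bar>c0 - a\<bar> * (real n * r)"
      using vr npos by (intro mult_left_mono) auto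
    finally have "- K * real n - a * u \<le> - c0 * u"
      unfolding K_def a_def[symmetric] by (simp add: algebra_simps)
    hence "c * exp (- K * real n - a * u) \<le> (laguerre_factor m \<alpha> n u)\<^sup>2 * exp (- c0 * u)"
      using L[OF vr] c unfolding uv[symmetric] by (intro mult_mono) auto
    hence "c * exp (- K * real n) * exp (- a * u) \<le> (laguerre_factor m \<alpha> n u)\<^sup>2 * exp (- c0 * u)"
      by (simp add: mult.assoc exp_add[symmetric])
    thus ?thesis using True sub c unfolding u_def a_def weight_def
      by (simp add: ennreal_mult[symmetric] indicator_def ennreal_leI subset_eq)
  qed simp
  hence "(\<integral>\<^sup>+x. ennreal (c * exp (- K * real n)) * ennreal (indicator {s - r .. s + r} (sqnorm n x / real n)
      * exp (- (1 / (2 * s)) * sqnorm n x)) \<partial>Rn n) \<le> shell_nn n B"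
    unfolding shell_nn_def by (rule nn_integral_mono)
  thus ?thesis by (subst nn_integral_cmult[symmetric]) auto
qed

lemma shell_mass_ge_window:
  assumes n: "1 \<le> n" and s: "0 < s" and sub: "{s - r .. s + r} \<subseteq> B"
    and c: "0 < c" and L: "\<And>v. \<bar>v - s\<bar> \<le> r \<Longrightarrow> c \<le> (laguerre_factor m \<alpha> n (real n * v))\<^sup>2"
    and G: "ennreal (sqrt (2 * pi * s) ^ n / 2) \<le> (\<integral>\<^sup>+x. ennreal (indicator {s - r .. s + r}
      (sqnorm n x / real n) * exp (- (1 / (2 * s)) * sqnorm n x)) \<partial>Rn n)"
    and b: "b \<le> phi s - \<bar>c0 - 1 / (2 * s)\<bar> * r"
  shows "c / 2 * exp (real n * b) \<le> shell_mass n B"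
proof -
  define K where "K = (c0 - 1 / (2 * s)) * s + \<bar>c0 - 1 / (2 * s)\<bar> * r"
  have "ln (sqrt (2 * pi * s)) - K = phi s - \<bar>c0 - 1 / (2 * s)\<bar> * r"
    unfolding K_def phi_def using s by (simp add: ln_sqrt field_simps)
  hence "real n * b \<le> real n * (ln (sqrt (2 * pi * s)) - K)"
    using b by (intro mult_left_mono) auto
  moreover have "sqrt (2 * pi * s) ^ n = exp (real n * ln (sqrt (2 * pi * s)))"
    using s by (simp add: exp_of_nat_mult)
  ultimately have "exp (real n * b) \<le> exp (- K * real n) * sqrt (2 * pi * s) ^ n"
    by (simp add: exp_add[symmetric] algebra_simps)
  hence "c / 2 * exp (real n * b) \<le> c * exp (- K * real n) * (sqrt (2 * pi * s) ^ n / 2)"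
    using c by (simp add: field_simps)
  also have "\<dots> \<le> shell_mass n B"
  proof -
    have "ennreal (c * exp (- K * real n) * (sqrt (2 * pi * s) ^ n / 2))
        = ennreal (c * exp (- K * real n)) * ennreal (sqrt (2 * pi * s) ^ n / 2)"
      by (rule ennreal_mult) (use c s in auto)
    also have "\<dots> \<le> ennreal (c * exp (- K * real n)) * (\<integral>\<^sup>+x. ennreal (indicator {s - r .. s + r}
          (sqnorm n x / real n) * exp (- (1 / (2 * s)) * sqnorm n x)) \<partial>Rn n)"
      using G by (intro mult_left_mono) auto
    also have "\<dots> \<le> shell_nn n B"
      unfolding K_def by (rule shell_nn_ge_gaussian_shell[OF n s sub c L])
    finally have "enn2real (ennreal (c * exp (- K * real n) * (sqrt (2 * pi * s) ^ n / 2)))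
        \<le> shell_mass n B"
      unfolding shell_mass_def by (rule enn2real_mono) (use shell_nn_finite in simp)
    thus ?thesis using c s by simp
  qed
  finally show ?thesis .
qed

text \<open>Split \<open>(t\<^sub>1, t\<^sub>2)\<close> into \<open>m\<close> windows: on one of them the Laguerre factor is bounded below,
  and there the weight dominates a constant times the Gaussian \<open>exp(-|x|\<^sup>2/(2s\<^sub>j))\<close> tuned to the
  window's centre \<open>s\<^sub>j\<close>, whose shell mass is \<open>exp(n \<phi>(s\<^sub>j) + o(n))\<close>.\<close>
lemma shell_mass_exp_rate_ge_interval:
  assumes t: "0 < t1" "t1 < t2"
    and B: "\<And>s. t1 \<le> s \<Longrightarrow> s \<le> t2 \<Longrightarrow> B \<le> phi s - (c0 + 1 / (2 * t1)) * (t2 - t1)"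
  shows "exp_rate_ge (\<lambda>n. shell_mass n {t1<..<t2}) B"
proof -
  define h where "h = (t2 - t1) / (2 * real m)"
  define r where "r = h / 3"
  define s where "s j = t1 + (2 * real j + 1) * h" for j :: nat
  have hpos: "0 < h" unfolding h_def using t m_pos by simp
  have rpos: "0 < r" unfolding r_def using hpos by simp
  have sj: "t1 + h \<le> s j" for j unfolding s_def using hpos by simp
  have spos: "0 < s j" "r < s j" for j using sj[of j] t hpos unfolding r_def by linarith+
  have window_bounds: "t1 < s j - r" "s j + r < t2" if "j < m" for j
  proof -
    have "real j + 1 \<le> real m" using that by simp
    hence "(2 * real j + 2) * h \<le> (2 * real m) * h" using hpos by (intro mult_right_mono) auto
    hence "(2 * real j + 1) * h + h/3 < 2 * real m * h" using hpos by (simp add: algebra_simps)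
    moreover have "2 * real m * h = t2 - t1" unfolding h_def using m_pos by simp
    ultimately show "s j + r < t2" unfolding s_def r_def by linarith
    show "t1 < s j - r" using sj[of j] hpos unfolding r_def by linarith
  qed
  hence window: "{s j - r .. s j + r} \<subseteq> {t1<..<t2}" if "j < m" for j
    using that by fastforce
  obtain c where cpos: "0 < c" and
    Lc: "\<And>n. 1 \<le> n \<Longrightarrow> \<exists>j<m. \<forall>v. \<bar>v - s j\<bar> \<le> r \<longrightarrow> c \<le> (laguerre_factor m \<alpha> n (real n * v))\<^sup>2"
    using laguerre_factor_sq_lower[OF m_pos \<alpha>_pos hpos, where ?t1.0 = t1] unfolding s_def r_def by blast
  have KB: "B \<le> phi (s j) - \<bar>c0 - 1 / (2 * s j)\<bar> * r" if "j < m" for j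
  proof -
    have sj: "t1 \<le> s j" "s j \<le> t2" using window_bounds[OF that] rpos by linarith+
    have "0 < 1 / (2 * s j)" using spos(1)[of j] by simp
    moreover have "1 / (2 * s j) \<le> 1 / (2 * t1)" using sj t by (intro divide_left_mono) auto
    ultimately have "\<bar>c0 - 1 / (2 * s j)\<bar> \<le> c0 + 1 / (2 * t1)" using c0_pos by linarith
    moreover have "r \<le> t2 - t1" using window_bounds[OF that] rpos by linarith
    ultimately have "\<bar>c0 - 1 / (2 * s j)\<bar> * r \<le> (c0 + 1 / (2 * t1)) * (t2 - t1)"
      using rpos by (intro mult_mono) auto
    thus ?thesis using B[OF sj] by linarith
  qed
  have "\<forall>\<^sub>F n in sequentially. \<forall>j\<in>{..<m}. ennreal (sqrt (2 * pi * s j) ^ n / 2) \<le>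
     (\<integral>\<^sup>+x. ennreal (indicator {s j - r .. s j + r} (sqnorm n x / real n)
        * exp (- (1 / (2 * s j)) * sqnorm n x)) \<partial>Rn n)"
    by (intro eventually_ball_finite ballI gaussian_shell_lower spos rpos) simp
  with eventually_ge_at_top[of 1]
  have "\<forall>\<^sub>F n in sequentially. c / 2 * exp (real n * B) \<le> shell_mass n {t1<..<t2}"
  proof eventually_elim
    case (elim n)
    obtain j where j: "j < m" and jL: "\<And>v. \<bar>v - s j\<bar> \<le> r \<Longrightarrow> c \<le> (laguerre_factor m \<alpha> n (real n * v))\<^sup>2"
      using Lc[OF elim(1)] by blast
    have G: "ennreal (sqrt (2 * pi * s j) ^ n / 2) \<le> (\<integral>\<^sup>+x. ennreal (indicator {s j - r .. s j + r}
      (sqnorm n x / real n) * exp (- (1 / (2 * s j)) * sqnorm n x)) \<partial>Rn n)"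
      using elim(2) j by simp
    show ?case by (rule shell_mass_ge_window[OF elim(1) spos(1) window[OF j] cpos jL G KB[OF j]])
  qed
  moreover have "exp_rate_ge (\<lambda>n. c / 2 * exp (real n * B)) B"
    by (rule exp_rate_ge_const_exp) (use cpos in simp)
  ultimately show ?thesis by (rule exp_rate_ge_mono) simp
qed

lemma shell_mass_exp_rate_ge:
  assumes t: "0 < t" and \<delta>0: "0 < \<delta>0"
  shows "exp_rate_ge (\<lambda>n. shell_mass n {t - \<delta>0<..<t + \<delta>0}) (phi t)"
proof (rule exp_rate_ge_approx)
  fix \<eta> :: real assume \<eta>: "0 < \<eta>"
  have "continuous (at t) phi" unfolding phi_def using t by (intro continuous_intros) auto
  then obtain \<delta>1 where \<delta>1: "0 < \<delta>1" and cont: "\<And>s. \<bar>s - t\<bar> < \<delta>1 \<Longrightarrow> \<bar>phi s - phi t\<bar> < \<eta>/2"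
    using \<eta> unfolding continuous_at_eps_delta dist_real_def by (metis half_gt_zero)
  have cpos: "0 < c0 + 1/t" using c0_pos t by (intro add_pos_pos) auto
  define \<delta> where "\<delta> = min \<delta>0 (min (\<delta>1/2) (min (t/2) (\<eta> / (4 * (c0 + 1/t)))))"
  have \<delta>_le: "\<delta> \<le> \<delta>0" "\<delta> \<le> \<delta>1/2" "\<delta> \<le> t/2" "\<delta> \<le> \<eta> / (4 * (c0 + 1/t))"
    unfolding \<delta>_def by (simp_all only: min.coboundedI1 min.coboundedI2 order_refl)
  have \<delta>: "0 < \<delta>" "\<delta> \<le> \<delta>0" "\<delta> < \<delta>1" "\<delta> \<le> t/2" "\<delta> \<le> \<eta> / (4 * (c0 + 1/t))"
  proof -
    have "0 < \<eta> / (4 * (c0 + 1/t))" using \<eta> cpos by simp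
    hence "0 < \<delta>" unfolding \<delta>_def using \<delta>0 \<delta>1 t by (simp only: min_less_iff_conj) simp
    thus "0 < \<delta>" "\<delta> \<le> \<delta>0" "\<delta> < \<delta>1" "\<delta> \<le> t/2" "\<delta> \<le> \<eta> / (4 * (c0 + 1/t))"
      using \<delta>_le \<delta>1 by auto
  qed
  have "(c0 + 1 / (2 * (t - \<delta>))) * ((t + \<delta>) - (t - \<delta>)) \<le> (c0 + 1 / t) * (2 * \<delta>)"
    using \<delta> t c0_pos by (intro mult_mono add_left_mono) (auto simp: field_simps)
  also have "\<dots> \<le> \<eta>/2"
    using \<delta>(5) cpos by (simp add: field_simps)
  finally have width: "(c0 + 1 / (2 * (t - \<delta>))) * ((t + \<delta>) - (t - \<delta>)) \<le> \<eta>/2" .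
  have rate: "exp_rate_ge (\<lambda>n. shell_mass n {t - \<delta><..<t + \<delta>}) (phi t - \<eta>)"
  proof (rule shell_mass_exp_rate_ge_interval)
    fix s assume "t - \<delta> \<le> s" "s \<le> t + \<delta>"
    hence "\<bar>s - t\<bar> < \<delta>1" using \<delta> by linarith
    hence "phi t - \<eta>/2 \<le> phi s" using cont[of s] by linarith
    thus "phi t - \<eta> \<le> phi s - (c0 + 1 / (2 * (t - \<delta>))) * ((t + \<delta>) - (t - \<delta>))"
      using width by linarith
  qed (use \<delta> t in auto)
  have "\<forall>\<^sub>F n in sequentially. shell_mass n {t - \<delta><..<t + \<delta>} \<le> shell_mass n {t - \<delta>0<..<t + \<delta>0}"
    using \<delta> by (intro always_eventually allI shell_mass_mono) auto
  thus "exp_rate_ge (\<lambda>n. shell_mass n {t - \<delta>0<..<t + \<delta>0}) (phi t - \<eta>)"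
    using rate by (rule exp_rate_ge_mono) simp
qed

lemma total_mass_exp_rate_ge: "exp_rate_ge (\<lambda>n. shell_mass n UNIV) (ln (pi / c0) / 2)"
proof -
  have ev: "\<forall>\<^sub>F n in sequentially.
      shell_mass n {1 / (2 * c0) - 1<..<1 / (2 * c0) + 1} \<le> shell_mass n UNIV"
    by (intro always_eventually allI shell_mass_mono) simp
  have rate: "exp_rate_ge (\<lambda>n. shell_mass n {1 / (2 * c0) - 1<..<1 / (2 * c0) + 1}) (phi (1 / (2 * c0)))"
    by (rule shell_mass_exp_rate_ge) (use c0_pos in simp_all)
  have "phi (1 / (2 * c0)) = ln (pi / c0) / 2"
    unfolding phi_def using c0_pos by (simp add: field_simps)
  thus ?thesis using exp_rate_ge_mono[OF ev rate] by simp
qed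

subsection \<open>The law of \<open>|X\<^sub>n|\<^sup>2/n\<close>\<close>

lemma Kn_square: "(Kn m \<rho> \<alpha> n x)\<^sup>2 = (exp (real n * \<rho>) / ((real m - 1 + real n / 2) gchoose (m - 1)))\<^sup>2 * weight n x"
proof -
  have "(exp (- (sqnorm n x / \<alpha>^2) / real m))\<^sup>2 = exp (- c0 * sqnorm n x)"
    unfolding c0_def power2_eq_square exp_add[symmetric] by (simp add: field_simps)
  thus ?thesis unfolding Kn_def weight_def laguerre_factor_def by (simp only: power_mult_distrib)
qed

lemma prob_eq_shell_mass_ratio:
  assumes n: "1 \<le> n" and prob: "prob_space Mn"
    and dens: "distributed Mn (Rn n) Xn (\<lambda>x. ennreal ((Kn m \<rho> \<alpha> n x)\<^sup>2 / (\<integral>y. (Kn m \<rho> \<alpha> n y)\<^sup>2 \<partial>Rn n)))"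
    and T: "T \<in> sets borel"
  shows "measure Mn {\<omega> \<in> space Mn. sqnorm n (Xn \<omega>) / real n \<in> T} = shell_mass n T / shell_mass n UNIV"
    and "0 < shell_mass n UNIV"
proof -
  define Z where "Z = (\<integral>y. (Kn m \<rho> \<alpha> n y)\<^sup>2 \<partial>Rn n)"
  define w where "w = (exp (real n * \<rho>) / ((real m - 1 + real n / 2) gchoose (m - 1)))\<^sup>2 / Z"
  have w: "0 \<le> w" unfolding w_def Z_def by simp
  have "(\<lambda>x. ennreal ((Kn m \<rho> \<alpha> n x)\<^sup>2 / Z)) = (\<lambda>x. ennreal (w * weight n x))"
    unfolding Kn_square w_def by (simp add: field_simps)
  hence D: "distr Mn (Rn n) Xn = density (Rn n) (\<lambda>x. ennreal (w * weight n x))"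
    and Xm: "Xn \<in> measurable Mn (Rn n)"
    using dens unfolding distributed_def Z_def[symmetric] by auto
  have mass: "measure Mn {\<omega> \<in> space Mn. sqnorm n (Xn \<omega>) / real n \<in> B} = w * shell_mass n B"
    if B: "B \<in> sets borel" for B
  proof -
    define E where "E = {x \<in> space (Rn n). sqnorm n x / real n \<in> B}"
    have E: "E \<in> sets (Rn n)" unfolding E_def using B by measurable
    have "{\<omega> \<in> space Mn. sqnorm n (Xn \<omega>) / real n \<in> B} = Xn -` E \<inter> space Mn"
      unfolding E_def using measurable_space[OF Xm] by auto
    hence "measure Mn {\<omega> \<in> space Mn. sqnorm n (Xn \<omega>) / real n \<in> B}
        = enn2real (emeasure (density (Rn n) (\<lambda>x. ennreal (w * weight n x))) E)"
      using measure_distr[OF Xm E] unfolding D measure_def by simp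
    also have "emeasure (density (Rn n) (\<lambda>x. ennreal (w * weight n x))) E
        = (\<integral>\<^sup>+ x. ennreal (w * weight n x) * indicator E x \<partial>Rn n)"
      by (rule emeasure_density) (use E in auto)
    also have "\<dots> = (\<integral>\<^sup>+ x. ennreal w * ennreal (indicator B (sqnorm n x / real n) * weight n x) \<partial>Rn n)"
      by (intro nn_integral_cong) (auto simp: E_def indicator_def ennreal_mult w weight_nonneg)
    also have "\<dots> = ennreal w * shell_nn n B" unfolding shell_nn_def
      by (rule nn_integral_cmult) (use B in measurable)
    finally show ?thesis unfolding shell_mass_def using w by (simp add: enn2real_mult)
  qed
  have "1 = w * shell_mass n UNIV"
    using mass[of UNIV] prob_space.prob_space[OF prob] by simp
  hence "w * shell_mass n UNIV = 1" by simp
  thus pos: "0 < shell_mass n UNIV"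
    using w by (metis less_eq_real_def mult_zero_right shell_mass_def enn2real_nonneg zero_neq_one)
  hence "w = 1 / shell_mass n UNIV" using \<open>w * shell_mass n UNIV = 1\<close> by (simp add: field_simps)
  thus "measure Mn {\<omega> \<in> space Mn. sqnorm n (Xn \<omega>) / real n \<in> T} = shell_mass n T / shell_mass n UNIV"
    using mass[OF T] by simp
qed

definition Lambda_star :: "real \<Rightarrow> real" where
  "Lambda_star x = ln (pi / c0) / 2 - phi (x\<^sup>2)"

lemma Lambda_star_eq: "0 < x \<Longrightarrow> Lambda_star x = c0 * x\<^sup>2 - 1/2 - ln (2 * c0 * x\<^sup>2) / 2"
proof -
  assume x: "0 < x"
  have "ln (pi / c0) - ln (2 * pi * x\<^sup>2) = - ln (2 * c0 * x\<^sup>2)"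
    using x c0_pos by (simp add: ln_div ln_mult)
  thus ?thesis unfolding Lambda_star_def phi_def by (simp add: field_simps)
qed

lemma rate_eq_Lambda_star: "0 < x \<Longrightarrow> rate m \<alpha> x = ereal (Lambda_star x)"
proof -
  assume x: "0 < x"
  have "\<alpha>^2 * real m / (4 * x^2) = 1 / (2 * c0 * x\<^sup>2)"
    unfolding c0_def using \<alpha>_pos m_pos x by (simp add: field_simps)
  hence "ln (\<alpha>^2 * real m / (4 * x^2)) = - ln (2 * c0 * x\<^sup>2)" using x c0_pos by (simp add: ln_div)
  moreover have "2 * x^2 / (\<alpha>^2 * real m) = c0 * x\<^sup>2" unfolding c0_def by simp
  ultimately show ?thesis unfolding rate_def Lambda_star_eq[OF x] using x by simp
qed

lemma Lambda_star_sqrt_eq_phi: "Lambda_star (sqrt b) = ln (pi / c0) / 2 - phi b" if "0 \<le> b"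
  using that unfolding Lambda_star_def by simp

lemma Lambda_star_small:
  assumes K: "0 \<le> K"
  obtains b where "0 < b" "b < 1 / (2 * c0)" "K < Lambda_star (sqrt b)"
proof -
  define b where "b = exp (- 2 * K - 2) / (2 * c0)"
  have b: "0 < b" unfolding b_def using c0_pos by simp
  have "exp (- 2 * K - 2) < 1" using K by simp
  hence "b < 1 / (2 * c0)" unfolding b_def using c0_pos by (simp add: divide_strict_right_mono)
  moreover have "ln (2 * c0 * b) = - 2 * K - 2" unfolding b_def using c0_pos by simp
  hence "Lambda_star (sqrt b) = c0 * b + K + 1/2" using b by (simp add: Lambda_star_eq field_simps)
  hence "K < Lambda_star (sqrt b)" using mult_pos_pos[OF c0_pos b] by simp
  ultimately show ?thesis using b that by blast
qed

lemma Lambda_star_large: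
  assumes K: "0 \<le> K"
  obtains b where "1 / (2 * c0) < b" "K < Lambda_star (sqrt b)"
proof -
  define b where "b = (4 * K + 5) / (2 * c0)"
  have b: "0 < b" unfolding b_def using K c0_pos by simp
  have "1 / (2 * c0) < b" unfolding b_def using K c0_pos by (simp add: divide_strict_right_mono)
  moreover have "ln (2 * c0 * b) \<le> ln 2 + (c0 * b - 1)"
    using b c0_pos ln_le_minus_one[of "c0 * b"] by (simp add: ln_mult)
  hence "c0 * b / 2 - ln 2 / 2 \<le> Lambda_star (sqrt b)" using b by (simp add: Lambda_star_eq field_simps)
  moreover have "c0 * b / 2 = K + 5/4" unfolding b_def using c0_pos by (simp add: field_simps)
  ultimately show ?thesis using that ln_2_less_1 by fastforce
qed

text \<open>\<open>\<Lambda>\<^sup>*\<close> vanishes at \<open>\<sigma> = sqrt (1/(2c\<^sub>0))\<close>, so a closed set on which the rate exceeds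
  \<open>K \<ge> 0\<close> stays a positive distance away from \<open>\<sigma>\<close> on either side.\<close>
lemma closed_set_below_sigma:
  assumes F: "closed F" and K: "0 \<le> K" and FK: "\<And>x. x \<in> F \<Longrightarrow> ereal K < rate m \<alpha> x"
  obtains b where "0 < b" "b < 1 / (2 * c0)" "K < Lambda_star (sqrt b)"
    "\<And>y. y \<in> F \<Longrightarrow> y \<le> sqrt (1 / (2 * c0)) \<Longrightarrow> y \<le> sqrt b"
proof (cases "F \<inter> {..sqrt (1 / (2 * c0))} \<noteq> {} \<and> 0 < Sup (F \<inter> {..sqrt (1 / (2 * c0))})")
  case True
  define \<sigma> where "\<sigma> = sqrt (1 / (2 * c0))"
  define a where "a = Sup (F \<inter> {..\<sigma>})"
  have bdd: "bdd_above (F \<inter> {..\<sigma>})" by (rule bdd_aboveI[of _ \<sigma>]) auto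
  have "F \<inter> {..\<sigma>} \<noteq> {}" using True unfolding \<sigma>_def by simp
  hence "a \<in> F \<inter> {..\<sigma>}" unfolding a_def using bdd F by (intro closed_contains_Sup) auto
  hence aF: "a \<in> F" "a \<le> \<sigma>" by auto
  have apos: "0 < a" using True unfolding a_def \<sigma>_def by simp
  have "a \<noteq> \<sigma>"
  proof
    assume "a = \<sigma>"
    hence "rate m \<alpha> a = 0"
      using rate_eq_Lambda_star[OF apos] c0_pos by (simp add: Lambda_star_eq \<sigma>_def)
    thus False using FK[OF aF(1)] K by simp
  qed
  hence "a\<^sup>2 < (1 / (2 * c0))" using aF(2) apos c0_pos power_strict_mono[of a \<sigma> 2]
    unfolding \<sigma>_def by simp
  moreover have "K < Lambda_star (sqrt (a\<^sup>2))" using FK[OF aF(1)] rate_eq_Lambda_star[OF apos] apos by simp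
  moreover have "y \<le> sqrt (a\<^sup>2)" if "y \<in> F" "y \<le> \<sigma>" for y
    using that apos bdd unfolding a_def by (auto intro: cSup_upper)
  ultimately show ?thesis using that[of "a\<^sup>2"] apos unfolding \<sigma>_def by auto
next
  case False
  obtain b where b: "0 < b" "b < 1 / (2 * c0)" "K < Lambda_star (sqrt b)"
    using Lambda_star_small[OF K] by blast
  have "y \<le> sqrt b" if y: "y \<in> F" "y \<le> sqrt (1 / (2 * c0))" for y
  proof -
    have bdd: "bdd_above (F \<inter> {..sqrt (1 / (2 * c0))})" by (rule bdd_aboveI[of _ "sqrt (1 / (2 * c0))"]) auto
    have "y \<le> Sup (F \<inter> {..sqrt (1 / (2 * c0))})" using y bdd by (auto intro: cSup_upper)
    moreover have "Sup (F \<inter> {..sqrt (1 / (2 * c0))}) \<le> 0" using False y by auto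
    ultimately show ?thesis using b(1) by (meson order_trans real_sqrt_ge_zero less_imp_le)
  qed
  thus ?thesis using that b by blast
qed

lemma closed_set_above_sigma:
  assumes F: "closed F" and K: "0 \<le> K" and FK: "\<And>x. x \<in> F \<Longrightarrow> ereal K < rate m \<alpha> x"
  obtains b where "1 / (2 * c0) < b" "K < Lambda_star (sqrt b)"
    "\<And>y. y \<in> F \<Longrightarrow> sqrt (1 / (2 * c0)) \<le> y \<Longrightarrow> sqrt b \<le> y"
proof (cases "F \<inter> {sqrt (1 / (2 * c0))..} = {}")
  case False
  define \<sigma> where "\<sigma> = sqrt (1 / (2 * c0))"
  define a where "a = Inf (F \<inter> {\<sigma>..})"
  have bdd: "bdd_below (F \<inter> {\<sigma>..})" by (rule bdd_belowI[of _ \<sigma>]) auto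
  have "F \<inter> {\<sigma>..} \<noteq> {}" using False unfolding \<sigma>_def by simp
  hence "a \<in> F \<inter> {\<sigma>..}" unfolding a_def using bdd F by (intro closed_contains_Inf) auto
  hence aF: "a \<in> F" "\<sigma> \<le> a" by auto
  have \<sigma>pos: "0 < \<sigma>" unfolding \<sigma>_def using c0_pos by simp
  hence apos: "0 < a" using aF(2) by linarith
  have "a \<noteq> \<sigma>"
  proof
    assume "a = \<sigma>"
    hence "rate m \<alpha> a = 0"
      using rate_eq_Lambda_star[OF apos] c0_pos by (simp add: Lambda_star_eq \<sigma>_def)
    thus False using FK[OF aF(1)] K by simp
  qed
  hence "\<sigma>\<^sup>2 < a\<^sup>2" using aF(2) \<sigma>pos power_strict_mono[of \<sigma> a 2] by simp
  moreover have "K < Lambda_star (sqrt (a\<^sup>2))" using FK[OF aF(1)] rate_eq_Lambda_star[OF apos] apos by simp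
  moreover have "sqrt (a\<^sup>2) \<le> y" if "y \<in> F" "\<sigma> \<le> y" for y
    using that apos bdd unfolding a_def by (auto intro: cInf_lower)
  ultimately show ?thesis using that[of "a\<^sup>2"] c0_pos unfolding \<sigma>_def by auto
next
  case True
  obtain b where "1 / (2 * c0) < b" "K < Lambda_star (sqrt b)"
    using Lambda_star_large[OF K] by blast
  thus ?thesis using that True by blast
qed

lemma eventually_total_mass_pos: "\<forall>\<^sub>F n in sequentially. 0 < shell_mass n UNIV"
  using total_mass_exp_rate_ge unfolding exp_rate_ge_def
  by (auto elim!: allE[of _ 1] eventually_mono intro: less_le_trans[OF exp_gt_zero])

lemma shell_mass_le_tails:
  assumes T: "\<And>v. 0 \<le> v \<Longrightarrow> v \<in> T \<Longrightarrow> v \<le> b1 \<or> b2 \<le> v"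
  shows "shell_mass n T \<le> shell_mass n {..b1} + shell_mass n {b2..}"
proof -
  have "indicator T (sqnorm n x / real n) * weight n x
      \<le> indicator {..b1} (sqnorm n x / real n) * weight n x
        + indicator {b2..} (sqnorm n x / real n) * weight n x" for x
    using T[of "sqnorm n x / real n"] sqnorm_nonneg[of n x] weight_nonneg[of n x]
    by (auto simp: indicator_def)
  hence "shell_nn n T \<le> (\<integral>\<^sup>+x. ennreal (indicator {..b1} (sqnorm n x / real n) * weight n x)
      + ennreal (indicator {b2..} (sqnorm n x / real n) * weight n x) \<partial>Rn n)"
    unfolding shell_nn_def using weight_nonneg
    by (intro nn_integral_mono) (simp add: ennreal_plus[symmetric] ennreal_leI del: ennreal_plus)
  also have "\<dots> = shell_nn n {..b1} + shell_nn n {b2..}"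
    unfolding shell_nn_def by (rule nn_integral_add) auto
  finally have "shell_mass n T \<le> enn2real (shell_nn n {..b1} + shell_nn n {b2..})"
    unfolding shell_mass_def by (rule enn2real_mono) (use shell_nn_finite in simp)
  also have "\<dots> = shell_mass n {..b1} + shell_mass n {b2..}"
    unfolding shell_mass_def by (rule enn2real_plus) (use shell_nn_finite in auto)
  finally show ?thesis .
qed

lemma ratio_exp_rate_ge:
  assumes "x \<in> interior A" "0 < x"
  shows "exp_rate_ge (\<lambda>n. shell_mass n {v. sqrt v \<in> A} / shell_mass n UNIV) (- Lambda_star x)"
proof -
  obtain \<delta> where \<delta>: "0 < \<delta>" "{x\<^sup>2 - \<delta><..<x\<^sup>2 + \<delta>} \<subseteq> {v. sqrt v \<in> A}"
    using interval_around_square_subset[OF assms] by blast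
  have "\<forall>\<^sub>F n in sequentially. shell_mass n {x\<^sup>2 - \<delta><..<x\<^sup>2 + \<delta>} \<le> shell_mass n {v. sqrt v \<in> A}"
    using \<delta>(2) by (intro always_eventually allI shell_mass_mono)
  moreover have "exp_rate_ge (\<lambda>n. shell_mass n {x\<^sup>2 - \<delta><..<x\<^sup>2 + \<delta>}) (phi (x\<^sup>2))"
    using assms(2) \<delta>(1) by (intro shell_mass_exp_rate_ge) auto
  ultimately have "exp_rate_ge (\<lambda>n. shell_mass n {v. sqrt v \<in> A}) (phi (x\<^sup>2))"
    by (rule exp_rate_ge_mono) simp
  hence "exp_rate_ge (\<lambda>n. shell_mass n {v. sqrt v \<in> A} / shell_mass n UNIV) (phi (x\<^sup>2) - ln (pi / c0) / 2)"
    by (rule exp_rate_ge_divide[OF _ total_mass_exp_rate_le eventually_total_mass_pos])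
  thus ?thesis unfolding Lambda_star_def by simp
qed

lemma ratio_exp_rate_le:
  assumes K: "0 \<le> K" and KI: "ereal K < (INF x\<in>closure A. rate m \<alpha> x)"
  obtains c where "c < - K" "exp_rate_le (\<lambda>n. shell_mass n {v. sqrt v \<in> A} / shell_mass n UNIV) c"
proof -
  have FK: "\<And>x. x \<in> closure A \<Longrightarrow> ereal K < rate m \<alpha> x" using less_INF_D[OF KI] .
  obtain b1 where b1: "0 < b1" "b1 < 1 / (2 * c0)" "K < Lambda_star (sqrt b1)"
    and below: "\<And>y. y \<in> closure A \<Longrightarrow> y \<le> sqrt (1 / (2 * c0)) \<Longrightarrow> y \<le> sqrt b1"
    using closed_set_below_sigma[OF closed_closure K FK] by blast
  obtain b2 where b2: "1 / (2 * c0) < b2" "K < Lambda_star (sqrt b2)"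
    and above: "\<And>y. y \<in> closure A \<Longrightarrow> sqrt (1 / (2 * c0)) \<le> y \<Longrightarrow> sqrt b2 \<le> y"
    using closed_set_above_sigma[OF closed_closure K FK] by blast
  have b2pos: "0 < b2" using b2(1) c0_pos by (smt (verit) divide_pos_pos)
  have "v \<le> b1 \<or> b2 \<le> v" if "0 \<le> v" "v \<in> {v. sqrt v \<in> A}" for v
    using below[of "sqrt v"] above[of "sqrt v"] that closure_subset[of A]
    by (force simp: real_sqrt_le_iff)
  hence "\<forall>\<^sub>F n in sequentially. shell_mass n {v. sqrt v \<in> A} \<le> shell_mass n {..b1} + shell_mass n {b2..}"
    by (intro always_eventually allI shell_mass_le_tails) auto
  moreover have "exp_rate_le (\<lambda>n. shell_mass n {..b1} + shell_mass n {b2..}) (max (phi b1) (phi b2))"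
  proof (rule exp_rate_le_add)
    have "2 * c0 * b1 < 1" using b1(2) c0_pos by (simp add: field_simps)
    with b1(1) have "exp_rate_le (\<lambda>n. shell_mass n {..b1}) (phi b1)" by (rule lower_tail_exp_rate_le)
    thus "exp_rate_le (\<lambda>n. shell_mass n {..b1}) (max (phi b1) (phi b2))"
      using exp_rate_le_mono[of "\<lambda>n. shell_mass n {..b1}" "\<lambda>n. shell_mass n {..b1}"] by simp
    have "1 < 2 * c0 * b2" using b2(1) c0_pos by (simp add: field_simps)
    with b2pos have "exp_rate_le (\<lambda>n. shell_mass n {b2..}) (phi b2)" by (rule upper_tail_exp_rate_le)
    thus "exp_rate_le (\<lambda>n. shell_mass n {b2..}) (max (phi b1) (phi b2))"
      using exp_rate_le_mono[of "\<lambda>n. shell_mass n {b2..}" "\<lambda>n. shell_mass n {b2..}"] by simp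
  qed
  ultimately have "exp_rate_le (\<lambda>n. shell_mass n {v. sqrt v \<in> A}) (max (phi b1) (phi b2))"
    by (rule exp_rate_le_mono) simp
  hence "exp_rate_le (\<lambda>n. shell_mass n {v. sqrt v \<in> A} / shell_mass n UNIV)
      (max (phi b1) (phi b2) - ln (pi / c0) / 2)"
    by (rule exp_rate_le_divide[OF _ total_mass_exp_rate_ge])
  moreover have "max (phi b1) (phi b2) - ln (pi / c0) / 2 < - K"
    using b1 b2 b2pos Lambda_star_sqrt_eq_phi[of b1] Lambda_star_sqrt_eq_phi[of b2] by auto
  ultimately show ?thesis using that by blast
qed

lemma ldp_lower_bound:
  assumes P: "\<forall>\<^sub>F n in sequentially. P n = shell_mass n {v. sqrt v \<in> A} / shell_mass n UNIV"
  shows "- (INF x\<in>interior A. rate m \<alpha> x) \<le> liminf (\<lambda>n. ereal (1 / real n) * ln_ereal (P n))"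
proof -
  have "- rate m \<alpha> x \<le> liminf (\<lambda>n. ereal (1 / real n) * ln_ereal (P n))" if x: "x \<in> interior A" for x
  proof (cases "0 < x")
    case True
    have "\<forall>\<^sub>F n in sequentially. shell_mass n {v. sqrt v \<in> A} / shell_mass n UNIV \<le> P n"
      using P by (auto elim: eventually_mono)
    hence "exp_rate_ge P (- Lambda_star x)"
      using ratio_exp_rate_ge[OF x True] by (rule exp_rate_ge_mono) simp
    thus ?thesis using liminf_ge_of_exp_rate_ge rate_eq_Lambda_star[OF True] by simp
  qed (simp add: rate_def)
  hence "- liminf (\<lambda>n. ereal (1 / real n) * ln_ereal (P n)) \<le> (INF x\<in>interior A. rate m \<alpha> x)"
    by (intro INF_greatest) (simp add: ereal_uminus_le_reorder)
  thus ?thesis by (simp add: ereal_uminus_le_reorder)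
qed

lemma ldp_upper_bound:
  assumes P: "\<forall>\<^sub>F n in sequentially. P n = shell_mass n {v. sqrt v \<in> A} / shell_mass n UNIV"
    and P1: "\<forall>\<^sub>F n in sequentially. P n \<le> 1"
  shows "limsup (\<lambda>n. ereal (1 / real n) * ln_ereal (P n)) \<le> - (INF x\<in>closure A. rate m \<alpha> x)"
proof (rule ereal_le_uminus_if_real_bounds)
  fix K assume KI: "ereal K < (INF x\<in>closure A. rate m \<alpha> x)"
  show "limsup (\<lambda>n. ereal (1 / real n) * ln_ereal (P n)) \<le> ereal (- K)"
  proof (cases "K < 0")
    case True
    have "limsup (\<lambda>n. ereal (1 / real n) * ln_ereal (P n)) \<le> ereal 0"
      by (rule limsup_le_of_exp_rate_le[OF exp_rate_le_of_le_one[OF P1]])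
    thus ?thesis using True by (simp add: order_trans)
  next
    case False
    then obtain c where c: "c < - K"
      and rate: "exp_rate_le (\<lambda>n. shell_mass n {v. sqrt v \<in> A} / shell_mass n UNIV) c"
      using ratio_exp_rate_le[of K A] KI by force
    have "\<forall>\<^sub>F n in sequentially. P n \<le> shell_mass n {v. sqrt v \<in> A} / shell_mass n UNIV"
      using P by (auto elim: eventually_mono)
    hence "exp_rate_le P c" using rate by (rule exp_rate_le_mono) simp
    hence "limsup (\<lambda>n. ereal (1 / real n) * ln_ereal (P n)) \<le> ereal c"
      by (rule limsup_le_of_exp_rate_le)
    thus ?thesis using c by (simp add: order_trans)
  qed
qed

theorem LDP_scaled_norm:
  fixes \<rho> :: real and M :: "nat \<Rightarrow> 'a measure" and X :: "nat \<Rightarrow> 'a \<Rightarrow> (nat \<Rightarrow> real)"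
  assumes prob: "\<And>n. n \<ge> 1 \<Longrightarrow> prob_space (M n)"
    and dens: "\<And>n. n \<ge> 1 \<Longrightarrow> distributed (M n) (Rn n) (X n)
        (\<lambda>x. ennreal ((Kn m \<rho> \<alpha> n x)^2 / (\<integral>y. (Kn m \<rho> \<alpha> n y)^2 \<partial>Rn n)))"
  shows "LDP M (\<lambda>n \<omega>. sqrt (sqnorm n (X n \<omega>)) / sqrt (real n)) (rate m \<alpha>)"
  unfolding LDP_def Let_def
proof (intro ballI conjI)
  fix A :: "real set" assume A: "A \<in> sets borel"
  define P where "P n = measure (M n) {\<omega> \<in> space (M n). sqrt (sqnorm n (X n \<omega>)) / sqrt (real n) \<in> A}" for n
  have T: "{v. sqrt v \<in> A} \<in> sets borel" using A by measurable
  have PQn: "P n = shell_mass n {v. sqrt v \<in> A} / shell_mass n UNIV" if n: "1 \<le> n" for n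
    using prob_eq_shell_mass_ratio(1)[OF n prob[OF n] dens[OF n] T]
    unfolding P_def by (simp add: real_sqrt_divide)
  have PQ: "\<forall>\<^sub>F n in sequentially. P n = shell_mass n {v. sqrt v \<in> A} / shell_mass n UNIV"
    using eventually_ge_at_top[of 1] by eventually_elim (rule PQn)
  have "\<forall>\<^sub>F n in sequentially. P n \<le> 1"
    using eventually_ge_at_top[of 1]
    by eventually_elim (unfold P_def, rule prob_space.prob_le_1[OF prob])
  with PQ show "limsup (\<lambda>n. ereal (1 / real n) * ln_ereal (measure (M n)
      {\<omega> \<in> space (M n). sqrt (sqnorm n (X n \<omega>)) / sqrt (real n) \<in> A})) \<le> - (INF x\<in>closure A. rate m \<alpha> x)"
    unfolding P_def by (rule ldp_upper_bound)
  show "- (INF x\<in>interior A. rate m \<alpha> x) \<le> liminf (\<lambda>n. ereal (1 / real n) * ln_ereal (measure (M n)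
      {\<omega> \<in> space (M n). sqrt (sqnorm n (X n \<omega>)) / sqrt (real n) \<in> A}))"
    using PQ unfolding P_def by (rule ldp_lower_bound)
qed (rule Liminf_le_Limsup, simp)

end

theorem lemma4p1:
  fixes m :: nat and \<rho> \<alpha> :: real
    and M :: "nat \<Rightarrow> 'a measure" and X :: "nat \<Rightarrow> 'a \<Rightarrow> (nat \<Rightarrow> real)"
  assumes m_pos: "m \<ge> 1"
    and \<alpha>_pos: "0 < \<alpha>"
    and \<alpha>_bound: "\<alpha> < exp (- \<rho>) / sqrt (real m * pi)"
    and prob: "\<And>n. n \<ge> 1 \<Longrightarrow> prob_space (M n)"
    and dens: "\<And>n. n \<ge> 1 \<Longrightarrow> distributed (M n) (Rn n) (X n)
        (\<lambda>x. ennreal ((Kn m \<rho> \<alpha> n x)^2 / (\<integral>y. (Kn m \<rho> \<alpha> n y)^2 \<partial>Rn n)))"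
  shows "LDP M (\<lambda>n \<omega>. sqrt (sqnorm n (X n \<omega>)) / sqrt (real n)) (rate m \<alpha>)"
proof -
  interpret laguerre_density m \<alpha> using m_pos \<alpha>_pos by unfold_locales
  show ?thesis using prob dens by (rule LDP_scaled_norm)
qed
end
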